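(* Assume (H1), (H3)$^*$ and (H4), and let $\nu$ be the normalised Lebesgue measure on $D\times V$. Then there exist $n_0\ge1$ (one may take $n_0=2$) and $c_1>0$ such that for every $(r,\upsilon)\in D\times V$ and every Borel $A\subseteq D\times V$, \[ \mathbf P_{(r,\upsilon)}\big((R_{T_{n_0}},\Upsilon_{T_{n_0}})\in A\ \big|\ n_0<\mathtt k\big)\ge c_1\,\nu(A). \]
   Context: $D\subseteq\mathbb R^3$ non-empty smooth bounded convex domain, $\partial D$ of zero Lebesgue measure; $V=\{\upsilon\in\mathbb R^3:\upsilon_{\min}\le|\upsilon|\le\upsilon_{\max}\}$, $0<\upsilon_{\min}<\upsilon_{\max}$. Measurable cross sections $\sigma_{\mathtt s},\sigma_{\mathtt f}\ge0$ on $D\times V$, $\pi_{\mathtt s},\pi_{\mathtt f}\ge0$ on $D\times V\times V$, $\int_V\pi_{\mathtt s}{\rm d}\upsilon'=1$, $m(r,\upsilon)=\int_V\pi_{\mathtt f}(r,\upsilon,\upsilon'){\rm d}\upsilon'$. (H1): all uniformly bounded. (H3)$^*$: $\inf_{r,\upsilon,\upsilon'}\sigma_{\mathtt f}(r,\upsilon)\pi_{\mathtt f}(r,\upsilon,\upsilon')>0$. (H4): $m\le N_{\max}$ for a constant $N_{\max}>1$ (fission yields at most $N_{\max}$ neutrons). The $\alpha\pi$-NRW $(R_t,\Upsilon_t)$ under $\mathbf P_{(r,\upsilon)}$ starts at $(r,\upsilon)$, moves linearly, is killed on leaving $D$ (exit time $\kappa^D$), and scatters at rate $\alpha=\sigma_{\mathtt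 s}+\sigma_{\mathtt f}m$; at the $k$-th scatter, from pre-scatter configuration $(r,\upsilon)$, an independent indicator $\mathtt I_k$ equals $1$ with probability $\sigma_{\mathtt f}m/(\sigma_{\mathtt s}+\sigma_{\mathtt f}m)$ (new velocity with density $\pi_{\mathtt f}(r,\upsilon,\cdot)/m(r,\upsilon)$) and $0$ otherwise (new velocity with density $\pi_{\mathtt s}(r,\upsilon,\cdot)$). $T_0=0$ and $T_n$ is the time of the $n$-th scatter with indicator $1$. Independently, for each $n\ge1$ let $\mathtt K_n$ be an indicator equal to $0$ with probability $m(R_{T_n},\Upsilon_{T_n-})/N_{\max}$ and $1$ otherwise; $\Gamma=\min\{n\ge1:\mathtt K_n=1\}$ and $\mathtt k=\Gamma\wedge\min\{n\ge1:T_n\ge\kappa^D\}$. Thus $\mathbf E_{(r,\upsilon)}[g(R_{T_n},\Upsilon_{T_n})\mathbf 1_{(n<\mathtt k)}]=N_{\max}^{-n}\mathbf E_{(r,\upsilon)}[\prod_{i=1}^n m(R_{T_i},\Upsilon_{T_i-})g(R_{T_n},\Upsilon_{T_n})\mathbf 1_{(T_n<\kappa^D)}]$. *)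

theory Defs
  imports "HOL-Analysis.Analysis"
begin

fun Ck_on :: "nat \<Rightarrow> (real^3) set \<Rightarrow> (real^3 \<Rightarrow> real) \<Rightarrow> bool" where
  "Ck_on 0 U f = continuous_on U f"
| "Ck_on (Suc k) U f =
     ((\<forall>x\<in>U. f differentiable (at x)) \<and>
      (\<forall>i\<in>(Basis :: (real^3) set). Ck_on k U (\<lambda>x. frechet_derivative f (at x) i)))"

definition Cinf_on :: "(real^3) set \<Rightarrow> (real^3 \<Rightarrow> real) \<Rightarrow> bool" where
  "Cinf_on U f \<longleftrightarrow> (\<forall>k. Ck_on k U f)"

definition smooth_domain :: "(real^3) set \<Rightarrow> bool" where
  "smooth_domain D \<longleftrightarrow> D \<noteq> {} \<and> open D \<and> connected D \<and>
     (\<exists>\<rho>. Cinf_on UNIV \<rho> \<and> D = {x. \<rho> x < 0} \<and>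
           (\<forall>x. \<rho> x = 0 \<longrightarrow> frechet_derivative \<rho> (at x) \<noteq> (\<lambda>_. 0)))"

definition Vset :: "real \<Rightarrow> real \<Rightarrow> (real^3) set" where
  "Vset vmin vmax = {v. vmin \<le> norm v \<and> norm v \<le> vmax}"

definition exit_time :: "(real^3) set \<Rightarrow> real^3 \<Rightarrow> real^3 \<Rightarrow> real" where
  "exit_time D r v = Inf {s. 0 \<le> s \<and> r + s *\<^sub>R v \<notin> D}"

definition mean_offspring ::
  "(real^3 \<Rightarrow> real^3 \<Rightarrow> real^3 \<Rightarrow> real) \<Rightarrow> (real^3) set \<Rightarrow> real^3 \<Rightarrow> real^3 \<Rightarrow> real" where
  "mean_offspring \<pi>f V r v = (LINT v':V|lborel. \<pi>f r v v')"

definition scat_rate ::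
  "(real^3 \<Rightarrow> real^3 \<Rightarrow> real) \<Rightarrow> (real^3 \<Rightarrow> real^3 \<Rightarrow> real) \<Rightarrow> (real^3 \<Rightarrow> real^3 \<Rightarrow> real)
     \<Rightarrow> real^3 \<Rightarrow> real^3 \<Rightarrow> real" where
  "scat_rate \<sigma>s \<sigma>f m r v = \<sigma>s r v + \<sigma>f r v * m r v"

definition first_event_density ::
  "(real^3 \<Rightarrow> real^3 \<Rightarrow> real) \<Rightarrow> real^3 \<Rightarrow> real^3 \<Rightarrow> real \<Rightarrow> real" where
  "first_event_density \<alpha> r v s =
     \<alpha> (r + s *\<^sub>R v) v * exp (- (LINT u:{0..s}|lborel. \<alpha> (r + u *\<^sub>R v) v))"

section \<open>The alpha-pi NRW via its first-event decomposition\<close>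

text \<open>One scatter event with indicator I = 0 (scattering) occurring before exit,
  followed by continuation h from the post-scatter configuration.\<close>
definition scatter_step ::
  "(real^3) set \<Rightarrow> (real^3) set \<Rightarrow> (real^3 \<Rightarrow> real^3 \<Rightarrow> real) \<Rightarrow> (real^3 \<Rightarrow> real^3 \<Rightarrow> real)
    \<Rightarrow> (real^3 \<Rightarrow> real^3 \<Rightarrow> real^3 \<Rightarrow> real) \<Rightarrow> (real^3 \<Rightarrow> real^3 \<Rightarrow> real^3 \<Rightarrow> real)
    \<Rightarrow> (real^3 \<Rightarrow> real^3 \<Rightarrow> ennreal) \<Rightarrow> real^3 \<Rightarrow> real^3 \<Rightarrow> ennreal" where
  "scatter_step D V \<sigma>s \<sigma>f \<pi>s \<pi>f h r v =
     (let m = mean_offspring \<pi>f V; \<alpha> = scat_rate \<sigma>s \<sigma>f m in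
      \<integral>\<^sup>+ s. indicator {0..<exit_time D r v} s *
        (let x = r + s *\<^sub>R v in
          ennreal (first_event_density \<alpha> r v s) *
          ennreal (\<sigma>s x v / \<alpha> x v) *
          (\<integral>\<^sup>+ v'. indicator V v' * ennreal (\<pi>s x v v') * h x v' \<partial>lborel)) \<partial>lborel)"

text \<open>One scatter event with indicator I = 1 (fission) occurring before exit, which
  survives the independent thinning K (probability m(x, v_-)/Nmax, v_- the pre-scatter
  velocity), followed by g evaluated at the post-fission configuration.\<close>
definition fission_step ::
  "(real^3) set \<Rightarrow> (real^3) set \<Rightarrow> (real^3 \<Rightarrow> real^3 \<Rightarrow> real) \<Rightarrow> (real^3 \<Rightarrow> real^3 \<Rightarrow> real)
    \<Rightarrow> (real^3 \<Rightarrow> real^3 \<Rightarrow> real^3 \<Rightarrow> real) \<Rightarrow> (real^3 \<Rightarrow> real^3 \<Rightarrow> real^3 \<Rightarrow> real) \<Rightarrow> real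
    \<Rightarrow> (real^3 \<Rightarrow> real^3 \<Rightarrow> ennreal) \<Rightarrow> real^3 \<Rightarrow> real^3 \<Rightarrow> ennreal" where
  "fission_step D V \<sigma>s \<sigma>f \<pi>s \<pi>f Nmax g r v =
     (let m = mean_offspring \<pi>f V; \<alpha> = scat_rate \<sigma>s \<sigma>f m in
      \<integral>\<^sup>+ s. indicator {0..<exit_time D r v} s *
        (let x = r + s *\<^sub>R v in
          ennreal (first_event_density \<alpha> r v s) *
          ennreal (\<sigma>f x v * m x v / \<alpha> x v) *
          ennreal (m x v / Nmax) *
          (\<integral>\<^sup>+ v'. indicator V v' * ennreal (\<pi>f x v v' / m x v) * g x v' \<partial>lborel)) \<partial>lborel)"

text \<open>E_(r,v)[ g(R_{T_1}, Upsilon_{T_1}) 1(1 < k) ]: any number of scatterings, then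
  a surviving fission, all before exit.\<close>
definition fission_kernel ::
  "(real^3) set \<Rightarrow> (real^3) set \<Rightarrow> (real^3 \<Rightarrow> real^3 \<Rightarrow> real) \<Rightarrow> (real^3 \<Rightarrow> real^3 \<Rightarrow> real)
    \<Rightarrow> (real^3 \<Rightarrow> real^3 \<Rightarrow> real^3 \<Rightarrow> real) \<Rightarrow> (real^3 \<Rightarrow> real^3 \<Rightarrow> real^3 \<Rightarrow> real) \<Rightarrow> real
    \<Rightarrow> (real^3 \<Rightarrow> real^3 \<Rightarrow> ennreal) \<Rightarrow> real^3 \<Rightarrow> real^3 \<Rightarrow> ennreal" where
  "fission_kernel D V \<sigma>s \<sigma>f \<pi>s \<pi>f Nmax g r v =
     (\<Sum>k. ((scatter_step D V \<sigma>s \<sigma>f \<pi>s \<pi>f ^^ k)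
              (fission_step D V \<sigma>s \<sigma>f \<pi>s \<pi>f Nmax g)) r v)"

text \<open>E_(r,v)[ g(R_{T_n}, Upsilon_{T_n}) 1(n < k) ] (strong Markov property at T_1,...,T_n).\<close>
definition killed_expect ::
  "(real^3) set \<Rightarrow> (real^3) set \<Rightarrow> (real^3 \<Rightarrow> real^3 \<Rightarrow> real) \<Rightarrow> (real^3 \<Rightarrow> real^3 \<Rightarrow> real)
    \<Rightarrow> (real^3 \<Rightarrow> real^3 \<Rightarrow> real^3 \<Rightarrow> real) \<Rightarrow> (real^3 \<Rightarrow> real^3 \<Rightarrow> real^3 \<Rightarrow> real) \<Rightarrow> real
    \<Rightarrow> nat \<Rightarrow> (real^3 \<Rightarrow> real^3 \<Rightarrow> ennreal) \<Rightarrow> real^3 \<Rightarrow> real^3 \<Rightarrow> ennreal" where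
  "killed_expect D V \<sigma>s \<sigma>f \<pi>s \<pi>f Nmax n g =
     (fission_kernel D V \<sigma>s \<sigma>f \<pi>s \<pi>f Nmax ^^ n) g"

text \<open>P_(r,v)( (R_{T_n}, Upsilon_{T_n}) \<in> A | n < k ).\<close>
definition cond_prob ::
  "(real^3) set \<Rightarrow> (real^3) set \<Rightarrow> (real^3 \<Rightarrow> real^3 \<Rightarrow> real) \<Rightarrow> (real^3 \<Rightarrow> real^3 \<Rightarrow> real)
    \<Rightarrow> (real^3 \<Rightarrow> real^3 \<Rightarrow> real^3 \<Rightarrow> real) \<Rightarrow> (real^3 \<Rightarrow> real^3 \<Rightarrow> real^3 \<Rightarrow> real) \<Rightarrow> real
    \<Rightarrow> nat \<Rightarrow> ((real^3) \<times> (real^3)) set \<Rightarrow> real^3 \<Rightarrow> real^3 \<Rightarrow> ennreal" where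
  "cond_prob D V \<sigma>s \<sigma>f \<pi>s \<pi>f Nmax n A r v =
     killed_expect D V \<sigma>s \<sigma>f \<pi>s \<pi>f Nmax n (\<lambda>x w. indicator A (x, w)) r v /
     killed_expect D V \<sigma>s \<sigma>f \<pi>s \<pi>f Nmax n (\<lambda>_ _. 1) r v"

end

theory Submission
  imports Defs
begin

(* The denominator E[1(2 < k)] is at most the probability that a first scatter happens before the
   exit time kappa(r, v), hence at most alpha_max kappa(r, v), because the killed walk counts each
   path at most once.  For the numerator keep only the paths whose first two scatters are surviving
   fissions.  The scatter rate alpha is bounded above and below and exit times are bounded, so the
   first-scatter time has a density bounded below on [0, kappa); (H3)* and (H4) bound below the
   probability of the surviving fission branch and the post-fission velocity density.  Finally the
   flights y = x + s w from a point x of D, with w in V and 0 < s, cover D with density at least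
   c |y - x|^(-2) >= c (2R)^(-2), and convexity keeps each flight inside D up to y.  This makes
   the numerator at least c' |A| kappa(r, v), and kappa(r, v) cancels in the ratio. *)

section \<open>Inequalities in the extended nonnegative reals\<close>

(* The integrands of the walk's first-event decomposition are not known to be measurable, so
   the following two inequalities are proved for arbitrary functions. *)

lemma nn_integral_cmult_ge: "c * integral\<^sup>N M f \<le> (\<integral>\<^sup>+ x. c * f x \<partial>M)"
  unfolding nn_integral_def SUP_mult_left_ennreal
proof (rule SUP_least)
  fix g assume "g \<in> {g. simple_function M g \<and> g \<le> f}"
  then have g: "simple_function M g" "g \<le> f" by auto
  have "c * integral\<^sup>S M g = integral\<^sup>S M (\<lambda>x. c * g x)"
    using g by simp
  also have "\<dots> \<le> (SUP g \<in> {g. simple_function M g \<and> g \<le> (\<lambda>x. c * f x)}. integral\<^sup>S M g)"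
    using g by (intro SUP_upper)
      (auto simp: le_fun_def intro!: mult_left_mono simple_function_compose2[where h="(*)"])
  finally show "c * integral\<^sup>S M g \<le> \<dots>" .
qed

lemma nn_integral_add_ge: "integral\<^sup>N M f + integral\<^sup>N M g \<le> (\<integral>\<^sup>+ x. f x + g x \<partial>M)"
proof -
  let ?S = "\<lambda>f. {g. simple_function M g \<and> g \<le> f}"
  have ne: "?S h \<noteq> {}" for h :: "_ \<Rightarrow> ennreal"
  proof -
    have "(\<lambda>_. 0) \<in> ?S h" by (auto simp: le_fun_def)
    then show ?thesis by blast
  qed
  have "integral\<^sup>S M a + integral\<^sup>S M b \<le> integral\<^sup>N M (\<lambda>x. f x + g x)"
    if "a \<in> ?S f" "b \<in> ?S g" for a b
  proof -
    have "integral\<^sup>S M a + integral\<^sup>S M b = integral\<^sup>S M (\<lambda>x. a x + b x)"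
      using that by simp
    also have "\<dots> \<le> integral\<^sup>N M (\<lambda>x. f x + g x)"
      unfolding nn_integral_def using that by (intro SUP_upper) (auto simp: le_fun_def intro!: add_mono)
    finally show ?thesis .
  qed
  then show ?thesis
    unfolding nn_integral_def[of M f] nn_integral_def[of M g]
      ennreal_SUP_add_left[OF ne, symmetric] ennreal_SUP_add_right[OF ne]
    by (intro SUP_least) (simp add: nn_integral_def)
qed

lemma divide_left_antimono_ennreal:
  fixes a b c :: ennreal
  assumes "b \<le> c"
  shows "a / c \<le> a / b"
proof -
  have "inverse c \<le> inverse b"
  proof (cases "b = 0 \<or> c = top")
    case False
    then obtain b' c' where "b = ennreal b'" "c = ennreal c'" "0 < b'" "b' \<le> c'"
      using assms by (cases b; cases c) (auto simp: top_unique)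
    then show ?thesis by (simp add: inverse_ennreal ennreal_leI le_imp_inverse_le)
  qed auto
  then show ?thesis unfolding divide_ennreal_def by (rule mult_left_mono) simp
qed

lemma ennreal_weighted_sum_le_1:
  fixes x y :: ennreal
  assumes "0 \<le> p" "0 \<le> q" "0 \<le> \<theta>" "\<theta> \<le> 1" "p + q \<le> 1" "x \<le> 1" "y \<le> 1"
  shows "ennreal p * ennreal \<theta> * x + ennreal q * y \<le> 1"
proof -
  have "ennreal p * ennreal \<theta> * x + ennreal q * y \<le> ennreal p * ennreal \<theta> * 1 + ennreal q * 1"
    using assms by (intro add_mono mult_left_mono) auto
  also have "\<dots> = ennreal (p * \<theta> + q)"
    using assms by (simp add: ennreal_mult)
  also have "p * \<theta> + q \<le> 1"
    using assms mult_left_le[of \<theta> p] by linarith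
  finally show ?thesis by (simp add: ennreal_leI)
qed

section \<open>Survival densities\<close>

lemma le_exp_mult_one_minus_exp_neg:
  fixes d K h :: real
  assumes "0 \<le> d" "d \<le> K * h"
  shows "d \<le> exp (K * h) * (1 - exp (- d))"
proof -
  have "d \<le> exp d - 1" using exp_ge_add_one_self[of d] by linarith
  also have "\<dots> = exp d * (1 - exp (- d))" by (simp add: algebra_simps exp_minus)
  also have "\<dots> \<le> exp (K * h) * (1 - exp (- d))"
    using assms by (intro mult_right_mono) auto
  finally show ?thesis .
qed

(* gamma is only measurable, so the fundamental theorem of calculus does not give
   int_0^t gamma exp(- cumulative_hazard) = 1 - exp(- cumulative_hazard t) directly; instead
   compare with a telescoping sum over a partition of mesh h, losing a factor exp(K h) -> 1. *)
locale bounded_hazard =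
  fixes \<gamma> :: "real \<Rightarrow> real" and K :: real
  assumes hazard_measurable[measurable]: "\<gamma> \<in> borel_measurable borel"
    and hazard_integrable: "integrable lborel \<gamma>"
    and hazard_nonneg: "\<And>u. 0 \<le> \<gamma> u"
    and hazard_le: "\<And>u. \<gamma> u \<le> K"
begin

lemma integrable_hazard_indicator[simp]:
  "S \<in> sets borel \<Longrightarrow> integrable lborel (\<lambda>u. indicator S u * \<gamma> u)"
  using integrable_mult_indicator[of S lborel \<gamma>] hazard_integrable by simp

definition cumulative_hazard :: "real \<Rightarrow> real" where
  "cumulative_hazard s = (\<integral>u. indicator {0..s} u * \<gamma> u \<partial>lborel)"

definition survival_density :: "real \<Rightarrow> ennreal" where
  "survival_density s = ennreal (\<gamma> s * exp (- cumulative_hazard s))"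

lemma survival_density_measurable[measurable]: "survival_density \<in> borel_measurable borel"
proof -
  have "cumulative_hazard a \<le> cumulative_hazard b" if "a \<le> b" for a b
    unfolding cumulative_hazard_def using that
    by (intro integral_mono) (auto simp: hazard_nonneg split: split_indicator)
  then have "cumulative_hazard \<in> borel_measurable borel"
    by (intro borel_measurable_mono monoI)
  then show ?thesis unfolding survival_density_def by measurable
qed

lemma interval_hazard_bounds:
  assumes "a \<le> b"
  shows "0 \<le> (\<integral>u. indicator {a<..b} u * \<gamma> u \<partial>lborel)"
    and "(\<integral>u. indicator {a<..b} u * \<gamma> u \<partial>lborel) \<le> K * (b - a)"
proof -
  show "0 \<le> (\<integral>u. indicator {a<..b} u * \<gamma> u \<partial>lborel)"
    by (intro integral_nonneg_AE) (auto simp: hazard_nonneg)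
  have "(\<integral>u. indicator {a<..b} u * \<gamma> u \<partial>lborel) \<le> (\<integral>u. indicator {a<..b} u * K \<partial>lborel)"
    using assms
    by (intro integral_mono) (auto simp: hazard_le integrable_indicator_iff split: split_indicator)
  then show "(\<integral>u. indicator {a<..b} u * \<gamma> u \<partial>lborel) \<le> K * (b - a)"
    using assms by (simp add: mult.commute)
qed

lemma cumulative_hazard_split:
  assumes "0 \<le> a" "a \<le> b"
  shows "cumulative_hazard b = cumulative_hazard a + (\<integral>u. indicator {a<..b} u * \<gamma> u \<partial>lborel)"
proof -
  have "(\<lambda>u. indicator {0..b} u * \<gamma> u) = (\<lambda>u. indicator {0..a} u * \<gamma> u + indicator {a<..b} u * \<gamma> u)"
    using assms by (auto simp: fun_eq_iff split: split_indicator)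
  then show ?thesis
    unfolding cumulative_hazard_def by simp
qed

lemma survival_density_interval_le:
  assumes "0 \<le> a" "a \<le> b"
  shows "(\<integral>\<^sup>+ s. indicator {a<..b} s * survival_density s \<partial>lborel)
    \<le> ennreal (exp (K * (b - a)) * (exp (- cumulative_hazard a) - exp (- cumulative_hazard b)))"
proof -
  define d where "d = (\<integral>u. indicator {a<..b} u * \<gamma> u \<partial>lborel)"
  note d_bounds = interval_hazard_bounds[OF assms(2), folded d_def]
  have "(\<integral>\<^sup>+ s. indicator {a<..b} s * survival_density s \<partial>lborel)
      \<le> (\<integral>\<^sup>+ s. ennreal (indicator {a<..b} s * \<gamma> s) * ennreal (exp (- cumulative_hazard a)) \<partial>lborel)"
  proof (intro nn_integral_mono)
    fix s
    show "indicator {a<..b} s * survival_density s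
      \<le> ennreal (indicator {a<..b} s * \<gamma> s) * ennreal (exp (- cumulative_hazard a))"
    proof (cases "s \<in> {a<..b}")
      case True
      then have "cumulative_hazard a \<le> cumulative_hazard s"
        using cumulative_hazard_split[of a s] interval_hazard_bounds(1)[of a s] assms by auto
      then show ?thesis
        using True by (auto simp: survival_density_def ennreal_mult'[symmetric] hazard_nonneg
            intro!: ennreal_leI mult_left_mono)
    qed simp
  qed
  also have "\<dots> = ennreal d * ennreal (exp (- cumulative_hazard a))"
    unfolding d_def
    by (subst nn_integral_multc, measurable, subst nn_integral_eq_integral) (auto simp: hazard_nonneg)
  also have "\<dots> \<le> ennreal (exp (K * (b - a)) * (1 - exp (- d)) * exp (- cumulative_hazard a))"
    using le_exp_mult_one_minus_exp_neg[OF d_bounds] d_bounds(1)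
    by (auto simp: ennreal_mult[symmetric] intro!: ennreal_leI mult_right_mono)
  also have "exp (- cumulative_hazard b) = exp (- cumulative_hazard a) * exp (- d)"
    using cumulative_hazard_split[OF assms] by (simp add: d_def exp_add[symmetric])
  then have "exp (K * (b - a)) * (1 - exp (- d)) * exp (- cumulative_hazard a)
      = exp (K * (b - a)) * (exp (- cumulative_hazard a) - exp (- cumulative_hazard b))"
    by (simp add: algebra_simps)
  finally show ?thesis .
qed

lemma survival_density_telescope:
  assumes "0 \<le> h"
  shows "(\<integral>\<^sup>+ s. indicator {0<..real n * h} s * survival_density s \<partial>lborel)
    \<le> ennreal (exp (K * h) * (exp (- cumulative_hazard 0) - exp (- cumulative_hazard (real n * h))))"
proof (induction n)
  case (Suc n)
  let ?a = "real n * h" and ?b = "real (Suc n) * h"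
  have ab: "0 \<le> ?a" "?a \<le> ?b" using assms by (auto simp: algebra_simps)
  have "(\<integral>\<^sup>+ s. indicator {0<..?b} s * survival_density s \<partial>lborel)
     = (\<integral>\<^sup>+ s. indicator {0<..?a} s * survival_density s + indicator {?a<..?b} s * survival_density s \<partial>lborel)"
    using ab by (intro nn_integral_cong) (auto split: split_indicator)
  also have "\<dots> = (\<integral>\<^sup>+ s. indicator {0<..?a} s * survival_density s \<partial>lborel)
      + (\<integral>\<^sup>+ s. indicator {?a<..?b} s * survival_density s \<partial>lborel)"
    by (rule nn_integral_add) measurable
  also have "\<dots> \<le> ennreal (exp (K * h) * (exp (- cumulative_hazard 0) - exp (- cumulative_hazard ?a)))
      + ennreal (exp (K * h) * (exp (- cumulative_hazard ?a) - exp (- cumulative_hazard ?b)))"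
    using Suc survival_density_interval_le[OF ab] by (intro add_mono) (auto simp: algebra_simps)
  also have "\<dots> = ennreal (exp (K * h) * (exp (- cumulative_hazard 0) - exp (- cumulative_hazard ?b)))"
    using cumulative_hazard_split[of 0 ?a] cumulative_hazard_split[OF ab]
      interval_hazard_bounds(1)[of 0 ?a] interval_hazard_bounds(1)[OF ab(2)] ab
    by (subst ennreal_plus[symmetric]) (auto simp: algebra_simps)
  finally show ?case .
qed simp

lemma survival_density_le_1: "(\<integral>\<^sup>+ s. indicator {0<..t} s * survival_density s \<partial>lborel) \<le> 1"
proof (cases "0 < t")
  case True
  have "cumulative_hazard 0 \<ge> 0"
    unfolding cumulative_hazard_def by (intro integral_nonneg_AE) (auto simp: hazard_nonneg)
  then have "exp (- cumulative_hazard 0) \<le> 1"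
    by simp
  then have diff_le_1: "exp (- cumulative_hazard 0) - exp (- cumulative_hazard s) \<le> 1" for s
    using exp_gt_zero[of "- cumulative_hazard s"] by linarith
  have bound: "(\<integral>\<^sup>+ s. indicator {0<..t} s * survival_density s \<partial>lborel) \<le> ennreal (exp (K * (t / real n)))"
    if "1 \<le> n" for n
  proof -
    have "real n * (t / real n) = t" using that by simp
    then have "(\<integral>\<^sup>+ s. indicator {0<..t} s * survival_density s \<partial>lborel)
      \<le> ennreal (exp (K * (t / real n)) * (exp (- cumulative_hazard 0) - exp (- cumulative_hazard t)))"
      using survival_density_telescope[of "t / real n" n] True by simp
    also have "\<dots> \<le> ennreal (exp (K * (t / real n)))"
      using diff_le_1 by (intro ennreal_leI mult_left_le) auto
    finally show ?thesis .
  qed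
  have "(\<lambda>n. ennreal (exp (K * (t / real n)))) \<longlonglongrightarrow> ennreal (exp (K * 0))"
    by (intro tendsto_ennrealI tendsto_intros lim_const_over_n)
  then have "(\<lambda>n. ennreal (exp (K * (t / real n)))) \<longlonglongrightarrow> 1"
    by simp
  then show ?thesis
    by (rule LIMSEQ_le_const) (use bound in auto)
qed simp

end

lemma nn_integral_first_event_density_le_1:
  fixes \<beta> :: "real \<Rightarrow> real"
  assumes measurable: "set_borel_measurable lborel {0..<t} \<beta>"
    and bounds: "\<And>u. 0 \<le> u \<Longrightarrow> u < t \<Longrightarrow> 0 \<le> \<beta> u \<and> \<beta> u \<le> K"
  shows "(\<integral>\<^sup>+ s. indicator {0..<t} s * ennreal (\<beta> s * exp (- (LINT u:{0..s}|lborel. \<beta> u))) \<partial>lborel) \<le> 1"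
proof (cases "0 < t")
  case True
  define \<gamma> where "\<gamma> u = indicator {0..<t} u * \<beta> u" for u
  interpret bounded_hazard \<gamma> K
  proof
    show "\<gamma> \<in> borel_measurable borel"
      using measurable unfolding set_borel_measurable_def \<gamma>_def by simp
    then show "integrable lborel \<gamma>"
      using True bounds by (intro integrableI_bounded_set[where A="{0..<t}" and B=K])
        (auto simp: \<gamma>_def split: split_indicator)
  qed (use True bounds[of 0] bounds in \<open>force simp: \<gamma>_def split: split_indicator\<close>)+
  have "(\<integral>\<^sup>+ s. indicator {0..<t} s * ennreal (\<beta> s * exp (- (LINT u:{0..s}|lborel. \<beta> u))) \<partial>lborel)
      = (\<integral>\<^sup>+ s. indicator {0..<t} s * survival_density s \<partial>lborel)"
  proof (intro nn_integral_cong)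
    fix s
    have "s \<in> {0..<t} \<Longrightarrow> (LINT u:{0..s}|lborel. \<beta> u) = cumulative_hazard s"
      unfolding cumulative_hazard_def set_lebesgue_integral_def
      by (intro arg_cong[where f="integral\<^sup>L lborel"]) (auto simp: \<gamma>_def split: split_indicator)
    then show "indicator {0..<t} s * ennreal (\<beta> s * exp (- (LINT u:{0..s}|lborel. \<beta> u)))
      = indicator {0..<t} s * survival_density s"
      by (auto simp: survival_density_def \<gamma>_def split: split_indicator)
  qed
  also have "\<dots> \<le> (\<integral>\<^sup>+ s. indicator {0<..t} s * survival_density s \<partial>lborel)"
    by (intro nn_integral_mono_AE eventually_mono[OF AE_lborel_singleton[of 0]])
      (auto split: split_indicator)
  also have "\<dots> \<le> 1"
    by (rule survival_density_le_1)
  finally show ?thesis .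
qed simp

section \<open>Exit times from a convex domain\<close>

lemma exit_time_in_domain:
  assumes "0 \<le> s" "s < exit_time D r v"
  shows "r + s *\<^sub>R v \<in> D"
proof (rule ccontr)
  assume "r + s *\<^sub>R v \<notin> D"
  then have "exit_time D r v \<le> s"
    unfolding exit_time_def using assms(1) by (intro cInf_lower) (auto intro: bdd_belowI[of _ 0])
  then show False using assms(2) by simp
qed

lemma exit_time_set_witness:
  assumes R: "\<And>y. y \<in> D \<Longrightarrow> norm y \<le> R" and "0 \<le> R" "w \<noteq> 0"
  shows "(R + norm x + 1) / norm w \<in> {s. 0 \<le> s \<and> x + s *\<^sub>R w \<notin> D}"
proof -
  define u where "u = (R + norm x + 1) / norm w"
  have "0 \<le> u" "norm (u *\<^sub>R w) = R + norm x + 1"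
    using assms unfolding u_def by auto
  moreover have "norm (u *\<^sub>R w) \<le> norm (x + u *\<^sub>R w) + norm x"
    using norm_triangle_ineq4[of "x + u *\<^sub>R w" x] by simp
  ultimately show ?thesis
    using R[of "x + u *\<^sub>R w"] unfolding u_def[symmetric] by force
qed

lemma exit_time_le:
  assumes "\<And>y. y \<in> D \<Longrightarrow> norm y \<le> R" "0 \<le> R" "w \<noteq> 0"
  shows "exit_time D x w \<le> (R + norm x + 1) / norm w"
  unfolding exit_time_def
  using exit_time_set_witness[OF assms] by (intro cInf_lower) (auto intro: bdd_belowI[of _ 0])

lemma exit_time_gt:
  assumes D: "open D" "convex D" and R: "\<And>y. y \<in> D \<Longrightarrow> norm y \<le> R" "0 \<le> R"
    and w: "w \<noteq> 0" and x: "x \<in> D" and s: "0 \<le> s" and xs: "x + s *\<^sub>R w \<in> D"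
  shows "s < exit_time D x w"
proof -
  obtain e where e: "0 < e" "ball (x + s *\<^sub>R w) e \<subseteq> D"
    using D(1) xs by (meson open_contains_ball)
  define \<eta> where "\<eta> = e / (2 * norm w)"
  have \<eta>: "0 < \<eta>" "\<eta> * norm w < e"
    unfolding \<eta>_def using e w by (auto simp: field_simps)
  then have far: "x + (s + \<eta>) *\<^sub>R w \<in> D"
    using e by (auto simp: dist_norm algebra_simps subset_iff)
  have seg: "x + u *\<^sub>R w \<in> D" if "0 \<le> u" "u \<le> s + \<eta>" for u
  proof -
    define \<theta> where "\<theta> = u / (s + \<eta>)"
    have "0 \<le> \<theta>" "\<theta> \<le> 1" "\<theta> * (s + \<eta>) = u"
      unfolding \<theta>_def using that s \<eta> by auto
    moreover have "(1 - \<theta>) *\<^sub>R x + \<theta> *\<^sub>R (x + (s + \<eta>) *\<^sub>R w) = x + (\<theta> * (s + \<eta>)) *\<^sub>R w"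
      by (simp add: algebra_simps)
    ultimately show ?thesis
      using convexD[OF D(2) x far, of "1 - \<theta>" \<theta>] by simp
  qed
  have "s + \<eta> \<le> exit_time D x w"
    unfolding exit_time_def
  proof (rule cInf_greatest)
    show "{s. 0 \<le> s \<and> x + s *\<^sub>R w \<notin> D} \<noteq> {}"
      using exit_time_set_witness[OF R w] by blast
  qed (use seg in force)
  then show ?thesis using \<eta> by simp
qed

lemma exit_time_pos:
  assumes "open D" "convex D" "\<And>y. y \<in> D \<Longrightarrow> norm y \<le> R" "0 \<le> R" "w \<noteq> 0" "x \<in> D"
  shows "0 < exit_time D x w"
  using exit_time_gt[OF assms, of 0] assms(6) by simp

section \<open>Flights from a point\<close>

lemma nn_integral_lborel_affine:
  fixes G :: "'a::euclidean_space \<Rightarrow> ennreal"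
  assumes [measurable]: "G \<in> borel_measurable borel" and "0 < s"
  shows "(\<integral>\<^sup>+ y. G y \<partial>lborel) = ennreal (s ^ DIM('a)) * (\<integral>\<^sup>+ w. G (x + s *\<^sub>R w) \<partial>lborel)"
  using assms(2)
  by (subst lborel_affine[of s x])
    (auto simp: nn_integral_density nn_integral_distr nn_integral_cmult)

text \<open>Density, at the displacement z, of the flight s w when the velocity w runs through V and
  the flight time s through (0, \<infinity>), both with Lebesgue measure.\<close>
definition flight_density :: "(real^3) set \<Rightarrow> real^3 \<Rightarrow> ennreal" where
  "flight_density V z = (\<integral>\<^sup>+ s. indicator {0<..} s * ennreal (1 / s^3) * indicator V ((1 / s) *\<^sub>R z) \<partial>lborel)"

lemma nn_integral_flights:
  assumes [measurable]: "V \<in> sets borel" "B \<in> borel_measurable borel"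
  shows "(\<integral>\<^sup>+ w. \<integral>\<^sup>+ s. indicator V w * indicator {0<..} s * B (x + s *\<^sub>R w) \<partial>lborel \<partial>lborel)
    = (\<integral>\<^sup>+ y. flight_density V (y - x) * B y \<partial>lborel)"
proof -
  have slice: "(\<integral>\<^sup>+ w. indicator V w * indicator {0<..} s * B (x + s *\<^sub>R w) \<partial>lborel)
      = (\<integral>\<^sup>+ y. indicator {0<..} s * ennreal (1 / s^3) * indicator V ((1 / s) *\<^sub>R (y - x)) * B y \<partial>lborel)"
    for s :: real
  proof (cases "0 < s")
    case True
    have "(\<integral>\<^sup>+ y. indicator {0<..} s * ennreal (1 / s^3) * indicator V ((1 / s) *\<^sub>R (y - x)) * B y \<partial>lborel)
        = ennreal (1 / s^3) * (\<integral>\<^sup>+ y. indicator V ((1 / s) *\<^sub>R (y - x)) * B y \<partial>lborel)"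
      using True by (subst nn_integral_cmult[symmetric]) (auto simp: mult.assoc)
    also have "\<dots> = ennreal (1 / s^3) * ennreal (s^3) * (\<integral>\<^sup>+ w. indicator V w * B (x + s *\<^sub>R w) \<partial>lborel)"
      using nn_integral_lborel_affine[of "\<lambda>y. indicator V ((1 / s) *\<^sub>R (y - x)) * B y" s x] True
      by (simp add: mult.assoc)
    also have "ennreal (1 / s^3) * ennreal (s^3) = 1"
      using True by (simp add: ennreal_mult[symmetric])
    finally show ?thesis
      using True by simp
  qed simp
  have "(\<integral>\<^sup>+ s. \<integral>\<^sup>+ w. indicator V w * indicator {0<..} s * B (x + s *\<^sub>R w) \<partial>lborel \<partial>lborel)
      = (\<integral>\<^sup>+ s. \<integral>\<^sup>+ y. indicator {0<..} s * ennreal (1 / s^3) * indicator V ((1 / s) *\<^sub>R (y - x)) * B y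
           \<partial>lborel \<partial>lborel)"
    by (intro nn_integral_cong slice)
  also have "\<dots> = (\<integral>\<^sup>+ y. \<integral>\<^sup>+ s. indicator {0<..} s * ennreal (1 / s^3) * indicator V ((1 / s) *\<^sub>R (y - x)) * B y
           \<partial>lborel \<partial>lborel)"
    by (rule lborel_pair.Fubini'[symmetric]) measurable
  also have "\<dots> = (\<integral>\<^sup>+ y. flight_density V (y - x) * B y \<partial>lborel)"
    unfolding flight_density_def by (intro nn_integral_cong nn_integral_multc) measurable
  finally show ?thesis
    by (subst lborel_pair.Fubini') measurable
qed

lemma flight_density_Vset_ge:
  fixes z :: "real^3"
  assumes vel: "0 < vmin" "vmin < vmax" and z: "z \<noteq> 0"
  shows "ennreal (vmin^3 * (1 / vmin - 1 / vmax) / (norm z)^2) \<le> flight_density (Vset vmin vmax) z"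
proof -
  define d where "d = norm z"
  have d: "0 < d" using z unfolding d_def by simp
  have "ennreal (vmin^3 * (1 / vmin - 1 / vmax) / d^2) = ennreal ((vmin / d)^3 * (d / vmin - d / vmax))"
    using d vel by (simp add: field_simps power2_eq_square power3_eq_cube)
  also have "\<dots> = (\<integral>\<^sup>+ s. ennreal ((vmin / d)^3) * indicator {d / vmax..d / vmin} s \<partial>lborel)"
    using vel d by (subst nn_integral_cmult_indicator) (auto simp: frac_le ennreal_mult[symmetric])
  also have "\<dots> \<le> flight_density (Vset vmin vmax) z"
    unfolding flight_density_def
  proof (intro nn_integral_mono)
    fix s
    show "ennreal ((vmin / d)^3) * indicator {d / vmax..d / vmin} s
      \<le> indicator {0<..} s * ennreal (1 / s^3) * indicator (Vset vmin vmax) ((1 / s) *\<^sub>R z)"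
    proof (cases "s \<in> {d / vmax..d / vmin}")
      case True
      moreover have "0 < d / vmax" using d vel by simp
      ultimately have s: "d / vmax \<le> s" "s \<le> d / vmin" "0 < s"
        by auto
      then have "vmin \<le> d / s" "d / s \<le> vmax" "vmin / d \<le> 1 / s"
        using d vel by (auto simp: field_simps)
      moreover have "norm ((1 / s) *\<^sub>R z) = d / s"
        using s unfolding d_def by simp
      ultimately have "(1 / s) *\<^sub>R z \<in> Vset vmin vmax" "(vmin / d)^3 \<le> (1 / s)^3"
        using vel d by (auto simp: Vset_def intro!: power_mono)
      then show ?thesis
        using True s by (simp add: ennreal_leI power_one_over)
    qed simp
  qed
  finally show ?thesis unfolding d_def .
qed

lemma Vset_borel[measurable]: "Vset a b \<in> sets borel"
  unfolding Vset_def by measurable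

lemma emeasure_le_flight_integral:
  fixes A :: "((real^3) \<times> (real^3)) set"
  assumes D: "open D" "convex D" and R: "\<And>y. y \<in> D \<Longrightarrow> norm y \<le> R"
    and x: "x \<in> D" and vel: "0 < vmin" "vmin < vmax"
    and A: "A \<in> sets borel" "A \<subseteq> D \<times> Vset vmin vmax"
  shows "ennreal (vmin^3 * (1 / vmin - 1 / vmax) / (2 * R)^2) * emeasure lborel A \<le>
    (\<integral>\<^sup>+ w. indicator (Vset vmin vmax) w * (\<integral>\<^sup>+ s. indicator {0..<exit_time D x w} s *
      (\<integral>\<^sup>+ u. indicator (Vset vmin vmax) u * indicator A (x + s *\<^sub>R w, u) \<partial>lborel) \<partial>lborel) \<partial>lborel)"
proof -
  define V where "V = Vset vmin vmax"
  define c where "c = vmin^3 * (1 / vmin - 1 / vmax) / (2 * R)^2"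
  define B where "B y = (\<integral>\<^sup>+ u. indicator A (y, u) \<partial>lborel)" for y
  have [measurable]: "V \<in> sets borel" "A \<in> sets borel" "B \<in> borel_measurable borel"
    using A(1) unfolding V_def B_def by measurable
  have R0: "0 \<le> R" using order.trans[OF norm_ge_zero R[OF x]] .
  have B_outside: "B y = 0" if "y \<notin> D" for y
  proof -
    have "indicator A (y, u) = (0::ennreal)" for u
      using A(2) that by (auto simp: indicator_def)
    then show ?thesis unfolding B_def by simp
  qed
  have "A \<in> sets (lborel \<Otimes>\<^sub>M lborel)"
    unfolding lborel_prod by simp
  then have "emeasure lborel A = (\<integral>\<^sup>+ y. B y \<partial>lborel)"
    unfolding B_def lborel_prod[symmetric] by (subst lborel.emeasure_pair_measure) auto
  then have "ennreal c * emeasure lborel A = (\<integral>\<^sup>+ y. ennreal c * B y \<partial>lborel)"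
    by (simp add: nn_integral_cmult)
  also have "\<dots> \<le> (\<integral>\<^sup>+ y. flight_density V (y - x) * B y \<partial>lborel)"
  proof (intro nn_integral_mono_AE eventually_mono[OF AE_lborel_singleton[of x]])
    fix y :: "real^3" assume "y \<noteq> x"
    show "ennreal c * B y \<le> flight_density V (y - x) * B y"
    proof (cases "y \<in> D")
      case True
      have "0 < norm (y - x)" "norm (y - x) \<le> 2 * R"
        using \<open>y \<noteq> x\<close> R[OF True] R[OF x] norm_triangle_ineq4[of y x] by auto
      then have "c \<le> vmin^3 * (1 / vmin - 1 / vmax) / (norm (y - x))^2"
        unfolding c_def using vel by (intro divide_left_mono power_mono mult_pos_pos) (auto simp: frac_le)
      then have "ennreal c \<le> flight_density V (y - x)"
        using flight_density_Vset_ge[OF vel, of "y - x"] \<open>y \<noteq> x\<close> unfolding V_def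
        by (meson ennreal_leI order_trans right_minus_eq)
      then show ?thesis by (rule mult_right_mono) simp
    qed (simp add: B_outside)
  qed
  also have "\<dots> = (\<integral>\<^sup>+ w. \<integral>\<^sup>+ s. indicator V w * indicator {0<..} s * B (x + s *\<^sub>R w) \<partial>lborel \<partial>lborel)"
    by (rule nn_integral_flights[symmetric]) measurable
  also have "\<dots> \<le> (\<integral>\<^sup>+ w. indicator V w * (\<integral>\<^sup>+ s. indicator {0..<exit_time D x w} s *
      (\<integral>\<^sup>+ u. indicator V u * indicator A (x + s *\<^sub>R w, u) \<partial>lborel) \<partial>lborel) \<partial>lborel)"
  proof (intro nn_integral_mono)
    fix w
    show "(\<integral>\<^sup>+ s. indicator V w * indicator {0<..} s * B (x + s *\<^sub>R w) \<partial>lborel)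
      \<le> indicator V w * (\<integral>\<^sup>+ s. indicator {0..<exit_time D x w} s *
          (\<integral>\<^sup>+ u. indicator V u * indicator A (x + s *\<^sub>R w, u) \<partial>lborel) \<partial>lborel)"
    proof (cases "w \<in> V")
      case True
      then have "w \<noteq> 0" using vel unfolding V_def Vset_def by auto
      have "indicator {0<..} s * B (x + s *\<^sub>R w)
        \<le> indicator {0..<exit_time D x w} s * (\<integral>\<^sup>+ u. indicator V u * indicator A (x + s *\<^sub>R w, u) \<partial>lborel)"
        for s
      proof (cases "0 < s \<and> x + s *\<^sub>R w \<in> D")
        case True
        then have "s < exit_time D x w"
          using exit_time_gt[OF D R R0 \<open>w \<noteq> 0\<close> x] by auto
        moreover have "(\<integral>\<^sup>+ u. indicator V u * indicator A (x + s *\<^sub>R w, u) \<partial>lborel) = B (x + s *\<^sub>R w)"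
          unfolding B_def V_def using A(2) by (intro nn_integral_cong) (auto split: split_indicator)
        ultimately show ?thesis using True by simp
      qed (auto simp: B_outside)
      then show ?thesis
        using True by (simp add: nn_integral_mono)
    qed simp
  qed
  finally show ?thesis unfolding c_def V_def .
qed

section \<open>The killed walk\<close>

locale nrw =
  fixes D V :: "(real^3) set" and vmin vmax Nmax C \<epsilon> R :: real
    and \<sigma>s \<sigma>f :: "real^3 \<Rightarrow> real^3 \<Rightarrow> real"
    and \<pi>s \<pi>f :: "real^3 \<Rightarrow> real^3 \<Rightarrow> real^3 \<Rightarrow> real"
  assumes V_eq: "V = Vset vmin vmax"
    and domain: "open D" "convex D" "D \<noteq> {}"
    and norm_le_R: "\<And>y. y \<in> D \<Longrightarrow> norm y \<le> R" and R_pos: "0 < R"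
    and speeds: "0 < vmin" "vmin < vmax"
    and meas: "set_borel_measurable borel (D \<times> V) (\<lambda>(r, v). \<sigma>s r v)"
              "set_borel_measurable borel (D \<times> V) (\<lambda>(r, v). \<sigma>f r v)"
              "set_borel_measurable borel (D \<times> V \<times> V) (\<lambda>(r, v, v'). \<pi>s r v v')"
              "set_borel_measurable borel (D \<times> V \<times> V) (\<lambda>(r, v, v'). \<pi>f r v v')"
    and nonneg: "\<And>r v. r \<in> D \<Longrightarrow> v \<in> V \<Longrightarrow> 0 \<le> \<sigma>s r v \<and> 0 \<le> \<sigma>f r v"
                "\<And>r v v'. r \<in> D \<Longrightarrow> v \<in> V \<Longrightarrow> v' \<in> V \<Longrightarrow> 0 \<le> \<pi>s r v v' \<and> 0 \<le> \<pi>f r v v'"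
    and norm_s: "\<And>r v. r \<in> D \<Longrightarrow> v \<in> V \<Longrightarrow> (LINT v':V|lborel. \<pi>s r v v') = 1"
    and le_C: "\<And>r v v'. r \<in> D \<Longrightarrow> v \<in> V \<Longrightarrow> v' \<in> V \<Longrightarrow>
               \<sigma>s r v \<le> C \<and> \<sigma>f r v \<le> C \<and> \<pi>s r v v' \<le> C \<and> \<pi>f r v v' \<le> C"
    and eps: "0 < \<epsilon>" "\<And>r v v'. r \<in> D \<Longrightarrow> v \<in> V \<Longrightarrow> v' \<in> V \<Longrightarrow> \<epsilon> \<le> \<sigma>f r v * \<pi>f r v v'"
    and Nmax: "1 < Nmax" "\<And>r v. r \<in> D \<Longrightarrow> v \<in> V \<Longrightarrow> mean_offspring \<pi>f V r v \<le> Nmax"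
begin

abbreviation "m \<equiv> mean_offspring \<pi>f V"
abbreviation "\<alpha> \<equiv> scat_rate \<sigma>s \<sigma>f m"
abbreviation "\<kappa> \<equiv> exit_time D"
abbreviation "scat \<equiv> scatter_step D V \<sigma>s \<sigma>f \<pi>s \<pi>f"
abbreviation "fiss \<equiv> fission_step D V \<sigma>s \<sigma>f \<pi>s \<pi>f Nmax"
abbreviation "kern \<equiv> fission_kernel D V \<sigma>s \<sigma>f \<pi>s \<pi>f Nmax"

definition "\<sigma>s_ext = (\<lambda>p. indicator (D \<times> V) p *\<^sub>R (case p of (r, v) \<Rightarrow> \<sigma>s r v))"
definition "\<sigma>f_ext = (\<lambda>p. indicator (D \<times> V) p *\<^sub>R (case p of (r, v) \<Rightarrow> \<sigma>f r v))"
definition "\<pi>s_ext = (\<lambda>p. indicator (D \<times> V \<times> V) p *\<^sub>R (case p of (r, v, v') \<Rightarrow> \<pi>s r v v'))"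
definition "\<pi>f_ext = (\<lambda>p. indicator (D \<times> V \<times> V) p *\<^sub>R (case p of (r, v, v') \<Rightarrow> \<pi>f r v v'))"

lemma cross_sections_ext_measurable[measurable]:
  "\<sigma>s_ext \<in> borel_measurable borel" "\<sigma>f_ext \<in> borel_measurable borel"
  "\<pi>s_ext \<in> borel_measurable borel" "\<pi>f_ext \<in> borel_measurable borel"
  using meas unfolding \<sigma>s_ext_def \<sigma>f_ext_def \<pi>s_ext_def \<pi>f_ext_def set_borel_measurable_def
  by auto

lemma V_borel[measurable]: "V \<in> sets borel"
  unfolding V_eq by simp

lemma V_nonzero: "w \<in> V \<Longrightarrow> w \<noteq> 0"
  using speeds unfolding V_eq Vset_def by auto

lemma V_finite: "emeasure lborel V < \<infinity>"
proof -
  have "emeasure lborel V \<le> emeasure lborel (cball (0::real^3) vmax)"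
    unfolding V_eq Vset_def by (intro emeasure_mono) auto
  then show ?thesis
    using emeasure_bounded_finite[of "cball (0::real^3) vmax"] by (simp add: top.not_eq_extremum)
qed

lemma V_measure_pos: "0 < measure lborel V"
proof -
  define c :: "real^3" where "c = ((vmin + vmax) / 2) *\<^sub>R axis 1 1"
  define \<delta> where "\<delta> = (vmax - vmin) / 2"
  have "ball c \<delta> \<subseteq> V"
  proof
    fix y assume "y \<in> ball c \<delta>"
    then have close: "norm (y - c) < (vmax - vmin) / 2"
      by (simp add: dist_norm norm_minus_commute \<delta>_def)
    have triangle: "norm y \<le> norm c + norm (y - c)" "norm c \<le> norm y + norm (y - c)"
      using norm_triangle_sub[of y c] norm_triangle_sub[of c y] by (auto simp: norm_minus_commute)
    have centre: "norm c = (vmin + vmax) / 2"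
      unfolding c_def using speeds by simp
    have "vmin \<le> norm y"
      using close triangle(2) centre by (simp add: field_simps)
    moreover have "norm y \<le> vmax"
      using close triangle(1) centre by (simp add: field_simps)
    ultimately show "y \<in> V"
      unfolding V_eq Vset_def by simp
  qed
  then have "measure lborel (ball c \<delta>) \<le> measure lborel V"
    using V_finite by (intro measure_mono_fmeasurable) (auto simp: fmeasurable_def)
  moreover have "0 < \<delta>" using speeds unfolding \<delta>_def by simp
  ultimately show ?thesis
    using content_ball_pos[of \<delta> c] by linarith
qed

lemma V_nonempty: "V \<noteq> {}"
  using V_measure_pos by auto

lemma C_pos: "0 < C"
proof -
  obtain r w where rw: "r \<in> D" "w \<in> V" using domain(3) V_nonempty by blast
  have "\<epsilon> \<le> \<sigma>f r w * \<pi>f r w w" using eps(2)[OF rw rw(2)] .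
  also have "\<dots> \<le> C * C"
    using le_C[OF rw rw(2)] nonneg(1)[OF rw] nonneg(2)[OF rw rw(2)] by (intro mult_mono) auto
  finally have "C \<noteq> 0"
    using eps(1) by auto
  moreover have "0 \<le> C"
    using le_C[OF rw rw(2)] nonneg(1)[OF rw] by linarith
  ultimately show ?thesis by simp
qed

lemma \<sigma>f_ge: "r \<in> D \<Longrightarrow> v \<in> V \<Longrightarrow> \<epsilon> / C \<le> \<sigma>f r v"
proof -
  assume rv: "r \<in> D" "v \<in> V"
  have "\<epsilon> \<le> \<sigma>f r v * \<pi>f r v v" using eps(2)[OF rv rv(2)] .
  also have "\<dots> \<le> \<sigma>f r v * C"
    using le_C[OF rv rv(2)] nonneg(1)[OF rv] by (intro mult_left_mono) auto
  finally show ?thesis using C_pos by (simp add: field_simps)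
qed

lemma \<pi>f_ge: "r \<in> D \<Longrightarrow> v \<in> V \<Longrightarrow> v' \<in> V \<Longrightarrow> \<epsilon> / C \<le> \<pi>f r v v'"
proof -
  assume rv: "r \<in> D" "v \<in> V" "v' \<in> V"
  have "\<epsilon> \<le> \<sigma>f r v * \<pi>f r v v'" using eps(2)[OF rv] .
  also have "\<dots> \<le> C * \<pi>f r v v'"
    using le_C[OF rv] nonneg(2)[OF rv] by (intro mult_right_mono) auto
  finally show ?thesis using C_pos by (simp add: field_simps mult.commute)
qed

definition m_min :: real where "m_min = \<epsilon> / C * measure lborel V"
definition \<alpha>_min :: real where "\<alpha>_min = \<epsilon> / C * m_min"
definition \<alpha>_max :: real where "\<alpha>_max = C + C * Nmax"

lemma m_min_pos: "0 < m_min"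
  unfolding m_min_def using eps(1) C_pos V_measure_pos by simp

lemma \<alpha>_min_pos: "0 < \<alpha>_min"
  unfolding \<alpha>_min_def using eps(1) C_pos m_min_pos by simp

lemma \<pi>_set_integrable:
  assumes "x \<in> D" "w \<in> V"
  shows "set_integrable lborel V (\<pi>f x w)" "set_integrable lborel V (\<pi>s x w)"
proof -
  have ext_f: "(\<lambda>v'. indicator V v' *\<^sub>R \<pi>f x w v') = (\<lambda>v'. \<pi>f_ext (x, w, v'))"
    using assms by (auto simp: \<pi>f_ext_def fun_eq_iff indicator_def)
  show "set_integrable lborel V (\<pi>f x w)"
    unfolding set_integrable_def ext_f
  proof (rule integrableI_bounded_set[where A=V and B=C])
    show "(\<lambda>v'. \<pi>f_ext (x, w, v')) \<in> borel_measurable lborel" by measurable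
  qed (use V_finite le_C[OF assms] nonneg(2)[OF assms] C_pos assms in \<open>auto simp: \<pi>f_ext_def indicator_def\<close>)
  have ext_s: "(\<lambda>v'. indicator V v' *\<^sub>R \<pi>s x w v') = (\<lambda>v'. \<pi>s_ext (x, w, v'))"
    using assms by (auto simp: \<pi>s_ext_def fun_eq_iff indicator_def)
  show "set_integrable lborel V (\<pi>s x w)"
    unfolding set_integrable_def ext_s
  proof (rule integrableI_bounded_set[where A=V and B=C])
    show "(\<lambda>v'. \<pi>s_ext (x, w, v')) \<in> borel_measurable lborel" by measurable
  qed (use V_finite le_C[OF assms] nonneg(2)[OF assms] C_pos assms in \<open>auto simp: \<pi>s_ext_def indicator_def\<close>)
qed

lemma mean_offspring_eq:
  "x \<in> D \<Longrightarrow> w \<in> V \<Longrightarrow> m x w = (\<integral>v'. \<pi>f_ext (x, w, v') \<partial>lborel)"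
  unfolding mean_offspring_def set_lebesgue_integral_def
  by (intro arg_cong[where f="integral\<^sup>L lborel"]) (auto simp: \<pi>f_ext_def fun_eq_iff indicator_def)

lemma mean_offspring_bounds:
  assumes "x \<in> D" "w \<in> V"
  shows "m_min \<le> m x w" "m x w \<le> Nmax" "0 < m x w"
proof -
  have "(LINT v':V|lborel. \<epsilon> / C) \<le> (LINT v':V|lborel. \<pi>f x w v')"
    using V_finite \<pi>_set_integrable(1)[OF assms] \<pi>f_ge[OF assms]
    by (intro set_integral_mono) (auto simp: set_integrable_def integrable_indicator_iff)
  moreover have "(LINT v':V|lborel. \<epsilon> / C) = m_min"
    unfolding m_min_def using V_finite by (subst set_integral_const) (auto simp: mult.commute)
  ultimately show "m_min \<le> m x w"
    unfolding mean_offspring_def by simp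
  then show "0 < m x w"
    using m_min_pos by simp
  show "m x w \<le> Nmax"
    using Nmax(2)[OF assms] .
qed

lemma fission_rate_ge: "x \<in> D \<Longrightarrow> w \<in> V \<Longrightarrow> \<alpha>_min \<le> \<sigma>f x w * m x w"
  unfolding \<alpha>_min_def using \<sigma>f_ge mean_offspring_bounds(1) eps(1) C_pos m_min_pos nonneg(1)
  by (intro mult_mono) auto

lemma scat_rate_bounds:
  assumes "x \<in> D" "w \<in> V"
  shows "\<alpha>_min \<le> \<alpha> x w" "\<alpha> x w \<le> \<alpha>_max"
proof -
  show "\<alpha>_min \<le> \<alpha> x w"
    using fission_rate_ge[OF assms] nonneg(1)[OF assms] unfolding scat_rate_def by simp
  have "\<sigma>f x w * m x w \<le> C * Nmax"
    using le_C[OF assms assms(2)] mean_offspring_bounds[OF assms] nonneg(1)[OF assms]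
    by (intro mult_mono) auto
  then show "\<alpha> x w \<le> \<alpha>_max"
    unfolding \<alpha>_max_def scat_rate_def using le_C[OF assms assms(2)] by simp
qed

lemma \<alpha>_max_pos: "0 < \<alpha>_max"
  using scat_rate_bounds \<alpha>_min_pos domain(3) V_nonempty by (meson all_not_in_conv less_le_trans order.trans)

lemma scat_rate_ray_measurable:
  assumes "v \<in> V"
  shows "set_borel_measurable lborel {0..<\<kappa> r v} (\<lambda>s. \<alpha> (r + s *\<^sub>R v) v)"
proof -
  have "(\<lambda>s. indicator {0..<\<kappa> r v} s *\<^sub>R \<alpha> (r + s *\<^sub>R v) v)
      = (\<lambda>s. indicator {0..<\<kappa> r v} s * (\<sigma>s_ext (r + s *\<^sub>R v, v)
          + \<sigma>f_ext (r + s *\<^sub>R v, v) * (\<integral>v'. \<pi>f_ext (r + s *\<^sub>R v, v, v') \<partial>lborel)))"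
    using exit_time_in_domain[of _ D r v] assms
    by (auto simp: fun_eq_iff mean_offspring_eq \<sigma>s_ext_def \<sigma>f_ext_def scat_rate_def
        split: split_indicator)
  then show ?thesis
    unfolding set_borel_measurable_def by (simp only:) measurable
qed

lemma cumulative_rate_bounds:
  assumes v: "v \<in> V" and s: "0 \<le> s" "s < \<kappa> r v"
  shows "0 \<le> (LINT u:{0..s}|lborel. \<alpha> (r + u *\<^sub>R v) v)"
    and "(LINT u:{0..s}|lborel. \<alpha> (r + u *\<^sub>R v) v) \<le> \<alpha>_max * s"
proof -
  have in_D: "r + u *\<^sub>R v \<in> D" if "u \<in> {0..s}" for u
    using exit_time_in_domain[of u D r v] that s by auto
  note rate = scat_rate_bounds[OF in_D v]
  have rate_nonneg: "0 \<le> \<alpha> (r + u *\<^sub>R v) v" if "u \<in> {0..s}" for u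
    using rate[OF that] \<alpha>_min_pos by linarith
  have rate_abs: "\<bar>\<alpha> (r + u *\<^sub>R v) v\<bar> \<le> \<alpha>_max" if "u \<in> {0..s}" for u
    using rate[OF that] rate_nonneg[OF that] by simp
  have restrict: "(\<lambda>u. indicator {0..s} u *\<^sub>R \<alpha> (r + u *\<^sub>R v) v)
      = (\<lambda>u. indicator {0..s} u * (indicator {0..<\<kappa> r v} u *\<^sub>R \<alpha> (r + u *\<^sub>R v) v))"
    using s by (auto simp: fun_eq_iff split: split_indicator)
  have ray: "(\<lambda>u. indicator {0..<\<kappa> r v} u *\<^sub>R \<alpha> (r + u *\<^sub>R v) v) \<in> borel_measurable lborel"
    using scat_rate_ray_measurable[OF v] unfolding set_borel_measurable_def .
  have "set_integrable lborel {0..s} (\<lambda>u. \<alpha> (r + u *\<^sub>R v) v)"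
    unfolding set_integrable_def restrict
  proof (rule integrableI_bounded_set[where A="{0..s}" and B=\<alpha>_max])
    show "(\<lambda>u. indicator {0..s} u * (indicator {0..<\<kappa> r v} u *\<^sub>R \<alpha> (r + u *\<^sub>R v) v))
      \<in> borel_measurable lborel"
      using ray by measurable
  qed (use rate_abs s in \<open>auto simp: emeasure_lborel_Icc_eq intro!: AE_I2 split: split_indicator\<close>)
  then have "(LINT u:{0..s}|lborel. \<alpha> (r + u *\<^sub>R v) v) \<le> (LINT u:{0..s}|lborel. \<alpha>_max)"
    using rate
    by (intro set_integral_mono) (auto simp: set_integrable_def integrable_indicator_iff emeasure_lborel_Icc_eq)
  then show "(LINT u:{0..s}|lborel. \<alpha> (r + u *\<^sub>R v) v) \<le> \<alpha>_max * s"
    using s by (simp add: set_integral_const mult.commute)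
  show "0 \<le> (LINT u:{0..s}|lborel. \<alpha> (r + u *\<^sub>R v) v)"
    unfolding set_lebesgue_integral_def
    by (intro integral_nonneg_AE AE_I2) (simp add: rate_nonneg split: split_indicator)
qed

definition flight_time_max :: real where "flight_time_max = (2 * R + 1) / vmin"

lemma \<kappa>_le_flight_time_max: "r \<in> D \<Longrightarrow> v \<in> V \<Longrightarrow> \<kappa> r v \<le> flight_time_max"
proof -
  assume rv: "r \<in> D" "v \<in> V"
  have "\<kappa> r v \<le> (R + norm r + 1) / norm v"
    using exit_time_le[OF norm_le_R less_imp_le[OF R_pos] V_nonzero[OF rv(2)]] .
  also have "\<dots> \<le> (2 * R + 1) / vmin"
    using norm_le_R[OF rv(1)] rv(2) speeds less_imp_le[OF R_pos] by (intro frac_le) (auto simp: V_eq Vset_def)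
  finally show ?thesis unfolding flight_time_max_def .
qed

lemma \<kappa>_pos: "r \<in> D \<Longrightarrow> v \<in> V \<Longrightarrow> 0 < \<kappa> r v"
  using exit_time_pos[OF domain(1,2) norm_le_R less_imp_le[OF R_pos] V_nonzero] .

definition density_min :: real where "density_min = \<alpha>_min * exp (- (\<alpha>_max * flight_time_max))"

lemma first_event_density_bounds:
  assumes v: "v \<in> V" and s: "0 \<le> s" "s < \<kappa> r v"
  shows "first_event_density \<alpha> r v s \<le> \<alpha>_max"
    and "r \<in> D \<Longrightarrow> density_min \<le> first_event_density \<alpha> r v s"
proof -
  note rate = scat_rate_bounds[OF exit_time_in_domain[OF s] v]
  note cumulative = cumulative_rate_bounds[OF v s]
  have "\<alpha> (r + s *\<^sub>R v) v * exp (- (LINT u:{0..s}|lborel. \<alpha> (r + u *\<^sub>R v) v)) \<le> \<alpha> (r + s *\<^sub>R v) v"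
    using rate \<alpha>_min_pos cumulative(1) by (intro mult_left_le) auto
  then show "first_event_density \<alpha> r v s \<le> \<alpha>_max"
    unfolding first_event_density_def using rate by linarith
  assume "r \<in> D"
  then have "s \<le> flight_time_max"
    using \<kappa>_le_flight_time_max[OF _ v] s by force
  then have "\<alpha>_max * s \<le> \<alpha>_max * flight_time_max"
    using \<alpha>_max_pos by (intro mult_left_mono) auto
  then have "exp (- (\<alpha>_max * flight_time_max)) \<le> exp (- (LINT u:{0..s}|lborel. \<alpha> (r + u *\<^sub>R v) v))"
    using cumulative(2) by simp
  then show "density_min \<le> first_event_density \<alpha> r v s"
    unfolding density_min_def first_event_density_def using rate \<alpha>_min_pos by (intro mult_mono) auto
qed

definition first_event_prob :: "real^3 \<Rightarrow> real^3 \<Rightarrow> ennreal" where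
  "first_event_prob r v = (\<integral>\<^sup>+ s. indicator {0..<\<kappa> r v} s * ennreal (first_event_density \<alpha> r v s) \<partial>lborel)"

lemma first_event_prob_le_1: "v \<in> V \<Longrightarrow> first_event_prob r v \<le> 1"
  unfolding first_event_prob_def first_event_density_def
proof (rule nn_integral_first_event_density_le_1)
  fix u assume "v \<in> V" "0 \<le> u" "u < \<kappa> r v"
  then show "0 \<le> \<alpha> (r + u *\<^sub>R v) v \<and> \<alpha> (r + u *\<^sub>R v) v \<le> \<alpha>_max"
    using scat_rate_bounds[OF exit_time_in_domain] \<alpha>_min_pos by (meson order.trans less_imp_le)
qed (rule scat_rate_ray_measurable)

lemma first_event_prob_le: "r \<in> D \<Longrightarrow> v \<in> V \<Longrightarrow> first_event_prob r v \<le> ennreal (\<alpha>_max * \<kappa> r v)"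
proof -
  assume r: "r \<in> D" and v: "v \<in> V"
  have "first_event_prob r v \<le> (\<integral>\<^sup>+ s. ennreal \<alpha>_max * indicator {0..<\<kappa> r v} s \<partial>lborel)"
    unfolding first_event_prob_def using first_event_density_bounds(1)[OF v]
    by (intro nn_integral_mono) (auto simp: ennreal_leI split: split_indicator)
  also have "\<dots> = ennreal (\<alpha>_max * \<kappa> r v)"
    using \<kappa>_pos[OF r v] \<alpha>_max_pos
    by (subst nn_integral_cmult_indicator) (auto simp: ennreal_mult)
  finally show ?thesis .
qed

definition scatter_branch :: "(real^3 \<Rightarrow> real^3 \<Rightarrow> ennreal) \<Rightarrow> real^3 \<Rightarrow> real^3 \<Rightarrow> ennreal" where
  "scatter_branch h x v =
     ennreal (\<sigma>s x v / \<alpha> x v) * (\<integral>\<^sup>+ v'. indicator V v' * ennreal (\<pi>s x v v') * h x v' \<partial>lborel)"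

definition fission_branch :: "(real^3 \<Rightarrow> real^3 \<Rightarrow> ennreal) \<Rightarrow> real^3 \<Rightarrow> real^3 \<Rightarrow> ennreal" where
  "fission_branch g x v =
     ennreal (\<sigma>f x v * m x v / \<alpha> x v) * ennreal (m x v / Nmax) *
       (\<integral>\<^sup>+ v'. indicator V v' * ennreal (\<pi>f x v v' / m x v) * g x v' \<partial>lborel)"

lemma scatter_step_eq:
  "scat h r v = (\<integral>\<^sup>+ s. indicator {0..<\<kappa> r v} s * ennreal (first_event_density \<alpha> r v s)
     * scatter_branch h (r + s *\<^sub>R v) v \<partial>lborel)"
  unfolding scatter_step_def scatter_branch_def Let_def by (simp add: mult.assoc)

lemma fission_step_eq:
  "fiss g r v = (\<integral>\<^sup>+ s. indicator {0..<\<kappa> r v} s * ennreal (first_event_density \<alpha> r v s)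
     * fission_branch g (r + s *\<^sub>R v) v \<partial>lborel)"
  unfolding fission_step_def fission_branch_def Let_def by (simp add: mult.assoc)

lemma event_integral_mono:
  assumes "\<And>s. 0 \<le> s \<Longrightarrow> s < \<kappa> r v \<Longrightarrow> f (r + s *\<^sub>R v) \<le> g (r + s *\<^sub>R v)"
  shows "(\<integral>\<^sup>+ s. indicator {0..<\<kappa> r v} s * ennreal (first_event_density \<alpha> r v s) * f (r + s *\<^sub>R v) \<partial>lborel)
    \<le> (\<integral>\<^sup>+ s. indicator {0..<\<kappa> r v} s * ennreal (first_event_density \<alpha> r v s) * g (r + s *\<^sub>R v) \<partial>lborel)"
  using assms by (intro nn_integral_mono) (auto intro: mult_left_mono split: split_indicator)

lemma velocity_prob_eq_1:
  assumes "x \<in> D" "w \<in> V"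
  shows "(\<integral>\<^sup>+ v'. indicator V v' * ennreal (\<pi>s x w v') \<partial>lborel) = 1"
    and "(\<integral>\<^sup>+ v'. indicator V v' * ennreal (\<pi>f x w v' / m x w) \<partial>lborel) = 1"
proof -
  have pos: "0 < m x w" using mean_offspring_bounds(3)[OF assms] .
  have "(\<integral>\<^sup>+ v'. indicator V v' * ennreal (\<pi>s x w v') \<partial>lborel) = (\<integral>\<^sup>+ v'. ennreal (indicator V v' *\<^sub>R \<pi>s x w v') \<partial>lborel)"
    by (intro nn_integral_cong) (auto split: split_indicator)
  also have "\<dots> = ennreal (LINT v':V|lborel. \<pi>s x w v')"
    unfolding set_lebesgue_integral_def using \<pi>_set_integrable(2)[OF assms] nonneg(2)[OF assms]
    by (intro nn_integral_eq_integral) (auto simp: set_integrable_def split: split_indicator)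
  finally show "(\<integral>\<^sup>+ v'. indicator V v' * ennreal (\<pi>s x w v') \<partial>lborel) = 1"
    using norm_s[OF assms] by simp
  have "(\<integral>\<^sup>+ v'. indicator V v' * ennreal (\<pi>f x w v' / m x w) \<partial>lborel)
      = (\<integral>\<^sup>+ v'. ennreal ((indicator V v' *\<^sub>R \<pi>f x w v') / m x w) \<partial>lborel)"
    by (intro nn_integral_cong) (auto split: split_indicator)
  also have "\<dots> = ennreal (\<integral>v'. (indicator V v' *\<^sub>R \<pi>f x w v') / m x w \<partial>lborel)"
    using \<pi>_set_integrable(1)[OF assms] nonneg(2)[OF assms] pos
    by (intro nn_integral_eq_integral) (auto simp: set_integrable_def split: split_indicator)
  also have "(\<integral>v'. (indicator V v' *\<^sub>R \<pi>f x w v') / m x w \<partial>lborel) = m x w / m x w"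
    by (simp add: mean_offspring_def set_lebesgue_integral_def)
  finally show "(\<integral>\<^sup>+ v'. indicator V v' * ennreal (\<pi>f x w v' / m x w) \<partial>lborel) = 1"
    using pos by simp
qed

lemma velocity_average_le_1:
  assumes "x \<in> D" "w \<in> V" and g: "\<And>v'. v' \<in> V \<Longrightarrow> g x v' \<le> 1"
  shows "(\<integral>\<^sup>+ v'. indicator V v' * ennreal (\<pi>s x w v') * g x v' \<partial>lborel) \<le> 1"
    and "(\<integral>\<^sup>+ v'. indicator V v' * ennreal (\<pi>f x w v' / m x w) * g x v' \<partial>lborel) \<le> 1"
proof -
  have "(\<integral>\<^sup>+ v'. indicator V v' * ennreal (\<pi>s x w v') * g x v' \<partial>lborel)
      \<le> (\<integral>\<^sup>+ v'. indicator V v' * ennreal (\<pi>s x w v') \<partial>lborel)"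
       "(\<integral>\<^sup>+ v'. indicator V v' * ennreal (\<pi>f x w v' / m x w) * g x v' \<partial>lborel)
      \<le> (\<integral>\<^sup>+ v'. indicator V v' * ennreal (\<pi>f x w v' / m x w) \<partial>lborel)"
    using mult_left_mono[OF g, of _ "ennreal _"]
    by (auto simp: indicator_def intro!: nn_integral_mono)
  then show "(\<integral>\<^sup>+ v'. indicator V v' * ennreal (\<pi>s x w v') * g x v' \<partial>lborel) \<le> 1"
    "(\<integral>\<^sup>+ v'. indicator V v' * ennreal (\<pi>f x w v' / m x w) * g x v' \<partial>lborel) \<le> 1"
    using velocity_prob_eq_1[OF assms(1,2)] by simp_all
qed

lemma branches_le_1:
  assumes "x \<in> D" "v \<in> V"
    and "\<And>x w. x \<in> D \<Longrightarrow> w \<in> V \<Longrightarrow> g x w \<le> 1" "\<And>x w. x \<in> D \<Longrightarrow> w \<in> V \<Longrightarrow> h x w \<le> 1"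
  shows "fission_branch g x v + scatter_branch h x v \<le> 1"
  unfolding fission_branch_def scatter_branch_def
proof (rule ennreal_weighted_sum_le_1)
  have "0 < \<alpha> x v" using scat_rate_bounds(1)[OF assms(1,2)] \<alpha>_min_pos by linarith
  then show "\<sigma>f x v * m x v / \<alpha> x v + \<sigma>s x v / \<alpha> x v \<le> 1"
    by (simp add: add_divide_distrib[symmetric] scat_rate_def)
qed (use nonneg(1)[OF assms(1,2)] mean_offspring_bounds[OF assms(1,2)] Nmax(1) \<alpha>_min_pos
      scat_rate_bounds(1)[OF assms(1,2)] velocity_average_le_1(2)[of x v g, OF assms(1,2) assms(3)[OF assms(1)]]
      velocity_average_le_1(1)[of x v h, OF assms(1,2) assms(4)[OF assms(1)]] in auto)

lemma fission_step_add_scatter_step_le: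
  assumes "v \<in> V"
    and "\<And>x w. x \<in> D \<Longrightarrow> w \<in> V \<Longrightarrow> g x w \<le> 1" "\<And>x w. x \<in> D \<Longrightarrow> w \<in> V \<Longrightarrow> h x w \<le> 1"
  shows "fiss g r v + scat h r v \<le> first_event_prob r v"
proof -
  have "fiss g r v + scat h r v
      \<le> (\<integral>\<^sup>+ s. indicator {0..<\<kappa> r v} s * ennreal (first_event_density \<alpha> r v s)
           * (fission_branch g (r + s *\<^sub>R v) v + scatter_branch h (r + s *\<^sub>R v) v) \<partial>lborel)"
    unfolding fission_step_eq scatter_step_eq distrib_left by (rule nn_integral_add_ge)
  also have "\<dots> \<le> (\<integral>\<^sup>+ s. indicator {0..<\<kappa> r v} s * ennreal (first_event_density \<alpha> r v s) * 1 \<partial>lborel)"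
    using branches_le_1[OF exit_time_in_domain assms] by (intro event_integral_mono) auto
  finally show ?thesis unfolding first_event_prob_def by simp
qed

lemma scatter_step_add_le: "scat h1 r v + scat h2 r v \<le> scat (\<lambda>x w. h1 x w + h2 x w) r v"
proof -
  have branch: "scatter_branch h1 x v + scatter_branch h2 x v \<le> scatter_branch (\<lambda>x w. h1 x w + h2 x w) x v" for x
    unfolding scatter_branch_def distrib_left[symmetric]
    by (intro mult_left_mono order.trans[OF nn_integral_add_ge]) (auto simp: distrib_left)
  have "scat h1 r v + scat h2 r v
      \<le> (\<integral>\<^sup>+ s. indicator {0..<\<kappa> r v} s * ennreal (first_event_density \<alpha> r v s)
           * (scatter_branch h1 (r + s *\<^sub>R v) v + scatter_branch h2 (r + s *\<^sub>R v) v) \<partial>lborel)"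
    unfolding scatter_step_eq distrib_left by (rule nn_integral_add_ge)
  also have "\<dots> \<le> scat (\<lambda>x w. h1 x w + h2 x w) r v"
    unfolding scatter_step_eq using branch by (intro nn_integral_mono mult_left_mono) auto
  finally show ?thesis .
qed

lemma scatter_step_sum_le:
  fixes n :: nat
  shows "(\<Sum>k<n. scat (f k) r v) \<le> scat (\<lambda>x w. \<Sum>k<n. f k x w) r v"
proof (induction n arbitrary: r v)
  case (Suc n)
  have "(\<Sum>k<Suc n. scat (f k) r v) \<le> scat (\<lambda>x w. \<Sum>k<n. f k x w) r v + scat (f n) r v"
    using Suc by (simp add: add_mono)
  also have "\<dots> \<le> scat (\<lambda>x w. \<Sum>k<Suc n. f k x w) r v"
    using scatter_step_add_le by simp
  finally show ?case .
qed simp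

lemma scatter_step_mono:
  assumes "\<And>x w. x \<in> D \<Longrightarrow> w \<in> V \<Longrightarrow> h1 x w \<le> h2 x w"
  shows "scat h1 r v \<le> scat h2 r v"
  unfolding scatter_step_eq scatter_branch_def
  by (intro event_integral_mono mult_left_mono[OF nn_integral_mono])
    (auto intro!: mult_left_mono assms exit_time_in_domain split: split_indicator)

lemma fission_step_mono:
  assumes "\<And>x w. x \<in> D \<Longrightarrow> w \<in> V \<Longrightarrow> g1 x w \<le> g2 x w"
  shows "fiss g1 r v \<le> fiss g2 r v"
  unfolding fission_step_eq fission_branch_def
  by (intro event_integral_mono mult_left_mono[OF nn_integral_mono])
    (auto intro!: mult_left_mono assms exit_time_in_domain split: split_indicator)

lemma scatter_step_funpow_mono:
  assumes "\<And>x w. x \<in> D \<Longrightarrow> w \<in> V \<Longrightarrow> h1 x w \<le> h2 x w" "x \<in> D" "w \<in> V"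
  shows "(scat ^^ k) h1 x w \<le> (scat ^^ k) h2 x w"
  using assms(2,3)
proof (induction k arbitrary: x w)
  case (Suc k)
  then show ?case using scatter_step_mono[of "(scat ^^ k) h1" "(scat ^^ k) h2"] by simp
qed (simp add: assms(1))

lemma fission_kernel_mono:
  assumes "\<And>x w. x \<in> D \<Longrightarrow> w \<in> V \<Longrightarrow> g1 x w \<le> g2 x w" "r \<in> D" "v \<in> V"
  shows "kern g1 r v \<le> kern g2 r v"
  unfolding fission_kernel_def
  using scatter_step_funpow_mono[OF fission_step_mono[OF assms(1)] assms(2,3)]
  by (intro suminf_le) auto

lemma fission_step_le_fission_kernel: "fiss g r v \<le> kern g r v"
  unfolding fission_kernel_def using sum_le_suminf[of "\<lambda>k. (scat ^^ k) (fiss g) r v" "{0}"] by simp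

text \<open>The k-th term of the series counts the paths whose first surviving fission comes after exactly
  k scatterings, so the partial sums stay below the probability of a first event.\<close>
lemma fission_kernel_le_first_event_prob:
  assumes g: "\<And>x w. x \<in> D \<Longrightarrow> w \<in> V \<Longrightarrow> g x w \<le> 1" and v: "v \<in> V"
  shows "kern g r v \<le> first_event_prob r v"
proof -
  define G where "G n r v = (\<Sum>k<n. (scat ^^ k) (fiss g) r v)" for n r v
  have partial: "G n r v \<le> first_event_prob r v" if "v \<in> V" for n r v
    using that
  proof (induction n arbitrary: r v)
    case (Suc n)
    have "G (Suc n) r v = fiss g r v + (\<Sum>k<n. scat ((scat ^^ k) (fiss g)) r v)"
      unfolding G_def by (simp only: sum.lessThan_Suc_shift funpow.simps comp_apply id_apply)
    also have "\<dots> \<le> fiss g r v + scat (G n) r v"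
      unfolding G_def by (intro add_mono order_refl scatter_step_sum_le)
    also have "\<dots> \<le> first_event_prob r v"
    proof (rule fission_step_add_scatter_step_le[OF Suc.prems g])
      show "G n x w \<le> 1" if "w \<in> V" for x w
        using Suc.IH[OF that] first_event_prob_le_1[OF that] by (rule order.trans)
    qed
    finally show ?case .
  qed (simp add: G_def)
  then show ?thesis
    unfolding fission_kernel_def using partial[OF v, unfolded G_def] by (intro suminf_le_const) auto
qed

definition fission_branch_min :: real where "fission_branch_min = \<alpha>_min / \<alpha>_max * (m_min / Nmax)"
definition velocity_density_min :: real where "velocity_density_min = \<epsilon> / C / Nmax"
definition fission_step_min :: real where
  "fission_step_min = density_min * fission_branch_min * velocity_density_min"

lemma fission_step_min_factors_pos:
  "0 < density_min" "0 < fission_branch_min" "0 < velocity_density_min"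
  unfolding density_min_def fission_branch_min_def velocity_density_min_def
  using \<alpha>_min_pos \<alpha>_max_pos m_min_pos Nmax(1) eps(1) C_pos by simp_all

lemma fission_step_min_pos: "0 < fission_step_min"
  unfolding fission_step_min_def using fission_step_min_factors_pos by simp

lemma fission_branch_ge:
  assumes "x \<in> D" "v \<in> V"
  shows "ennreal (fission_branch_min * velocity_density_min) * (\<integral>\<^sup>+ w. indicator V w * g x w \<partial>lborel)
    \<le> fission_branch g x v"
proof -
  note m = mean_offspring_bounds[OF assms]
  have rate: "0 < \<alpha> x v" "\<alpha> x v \<le> \<alpha>_max"
    using scat_rate_bounds[OF assms] \<alpha>_min_pos by auto
  have "\<alpha>_min / \<alpha>_max \<le> \<sigma>f x v * m x v / \<alpha> x v"
    using fission_rate_ge[OF assms] rate \<alpha>_min_pos by (intro frac_le) auto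
  moreover have "m_min / Nmax \<le> m x v / Nmax"
    using m Nmax(1) by (intro divide_right_mono) auto
  moreover have "0 \<le> \<sigma>f x v * m x v / \<alpha> x v" "0 \<le> m x v / Nmax"
    using nonneg(1)[OF assms] m rate Nmax(1) by auto
  ultimately have "fission_branch_min \<le> (\<sigma>f x v * m x v / \<alpha> x v) * (m x v / Nmax)"
    unfolding fission_branch_min_def using m_min_pos Nmax(1) by (intro mult_mono) auto
  then have "ennreal fission_branch_min \<le> ennreal (\<sigma>f x v * m x v / \<alpha> x v) * ennreal (m x v / Nmax)"
    using nonneg(1)[OF assms] m rate Nmax(1) by (simp add: ennreal_mult[symmetric] ennreal_leI)
  moreover have "ennreal velocity_density_min * (\<integral>\<^sup>+ w. indicator V w * g x w \<partial>lborel)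
      \<le> (\<integral>\<^sup>+ w. indicator V w * ennreal (\<pi>f x v w / m x v) * g x w \<partial>lborel)"
  proof (rule order.trans[OF nn_integral_cmult_ge], intro nn_integral_mono)
    fix w
    have "w \<in> V \<Longrightarrow> velocity_density_min \<le> \<pi>f x v w / m x v"
      unfolding velocity_density_min_def using \<pi>f_ge[OF assms] nonneg(2)[OF assms] m eps(1) C_pos
      by (intro frac_le) auto
    then show "ennreal velocity_density_min * (indicator V w * g x w)
      \<le> indicator V w * ennreal (\<pi>f x v w / m x v) * g x w"
      by (auto intro!: mult_right_mono ennreal_leI split: split_indicator)
  qed
  ultimately have "ennreal fission_branch_min * (ennreal velocity_density_min * (\<integral>\<^sup>+ w. indicator V w * g x w \<partial>lborel))
      \<le> ennreal (\<sigma>f x v * m x v / \<alpha> x v) * ennreal (m x v / Nmax)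
        * (\<integral>\<^sup>+ w. indicator V w * ennreal (\<pi>f x v w / m x v) * g x w \<partial>lborel)"
    by (rule mult_mono) auto
  then show ?thesis
    unfolding fission_branch_def using fission_step_min_factors_pos
    by (simp add: ennreal_mult mult.assoc)
qed

lemma fission_step_ge:
  assumes "r \<in> D" "v \<in> V"
  shows "ennreal fission_step_min
      * (\<integral>\<^sup>+ s. indicator {0..<\<kappa> r v} s * (\<integral>\<^sup>+ w. indicator V w * g (r + s *\<^sub>R v) w \<partial>lborel) \<partial>lborel)
    \<le> fiss g r v"
  unfolding fission_step_eq
proof (rule order.trans[OF nn_integral_cmult_ge], intro nn_integral_mono)
  fix s
  show "ennreal fission_step_min * (indicator {0..<\<kappa> r v} s * (\<integral>\<^sup>+ w. indicator V w * g (r + s *\<^sub>R v) w \<partial>lborel))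
    \<le> indicator {0..<\<kappa> r v} s * ennreal (first_event_density \<alpha> r v s) * fission_branch g (r + s *\<^sub>R v) v"
  proof (cases "0 \<le> s \<and> s < \<kappa> r v")
    case True
    have "ennreal density_min \<le> ennreal (first_event_density \<alpha> r v s)"
      using first_event_density_bounds(2)[OF assms(2) _ _ assms(1)] True by (auto intro: ennreal_leI)
    then have "ennreal density_min * (ennreal (fission_branch_min * velocity_density_min)
        * (\<integral>\<^sup>+ w. indicator V w * g (r + s *\<^sub>R v) w \<partial>lborel))
      \<le> ennreal (first_event_density \<alpha> r v s) * fission_branch g (r + s *\<^sub>R v) v"
      using fission_branch_ge[OF exit_time_in_domain assms(2)] True by (intro mult_mono) auto
    moreover have "ennreal fission_step_min
        = ennreal density_min * ennreal (fission_branch_min * velocity_density_min)"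
      unfolding fission_step_min_def using fission_step_min_factors_pos
      by (simp add: ennreal_mult mult.assoc)
    ultimately show ?thesis
      using True by (simp add: mult.assoc)
  qed auto
qed

definition flight_const :: real where "flight_const = vmin^3 * (1 / vmin - 1 / vmax) / (2 * R)^2"

lemma flight_const_pos: "0 < flight_const"
  unfolding flight_const_def using speeds R_pos by (simp add: frac_less2)

lemma velocity_integral_fission_step_ge:
  assumes A: "A \<in> sets borel" "A \<subseteq> D \<times> V" and x: "x \<in> D"
  shows "ennreal (fission_step_min * flight_const) * emeasure lborel A
    \<le> (\<integral>\<^sup>+ w. indicator V w * fiss (\<lambda>x w. indicator A (x, w)) x w \<partial>lborel)"
proof -
  have "ennreal (fission_step_min * flight_const) * emeasure lborel A
      = ennreal fission_step_min * (ennreal flight_const * emeasure lborel A)"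
    using fission_step_min_pos less_imp_le[OF flight_const_pos] by (simp add: ennreal_mult mult.assoc)
  also have "\<dots> \<le> ennreal fission_step_min * (\<integral>\<^sup>+ w. indicator V w * (\<integral>\<^sup>+ s. indicator {0..<\<kappa> x w} s *
      (\<integral>\<^sup>+ u. indicator V u * indicator A (x + s *\<^sub>R w, u) \<partial>lborel) \<partial>lborel) \<partial>lborel)"
    using emeasure_le_flight_integral[OF domain(1,2) norm_le_R x speeds A(1)] A(2)
    unfolding V_eq flight_const_def by (intro mult_left_mono) auto
  also have "\<dots> \<le> (\<integral>\<^sup>+ w. indicator V w * fiss (\<lambda>x w. indicator A (x, w)) x w \<partial>lborel)"
  proof (rule order.trans[OF nn_integral_cmult_ge], intro nn_integral_mono)
    fix w
    show "ennreal fission_step_min * (indicator V w * (\<integral>\<^sup>+ s. indicator {0..<\<kappa> x w} s *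
        (\<integral>\<^sup>+ u. indicator V u * indicator A (x + s *\<^sub>R w, u) \<partial>lborel) \<partial>lborel))
      \<le> indicator V w * fiss (\<lambda>x w. indicator A (x, w)) x w"
      using fission_step_ge[OF x, of w "\<lambda>x w. indicator A (x, w)"]
      by (auto simp: mult.left_commute split: split_indicator)
  qed
  finally show ?thesis .
qed

lemma killed_expect_2_ge:
  assumes A: "A \<in> sets borel" "A \<subseteq> D \<times> V" and rv: "r \<in> D" "v \<in> V"
  shows "ennreal (fission_step_min^2 * flight_const * \<kappa> r v) * emeasure lborel A
    \<le> killed_expect D V \<sigma>s \<sigma>f \<pi>s \<pi>f Nmax 2 (\<lambda>x w. indicator A (x, w)) r v"
proof -
  let ?g = "\<lambda>x w. indicator A (x, w) :: ennreal"
  have "ennreal (fission_step_min * flight_const) * emeasure lborel A * ennreal (\<kappa> r v)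
      = (\<integral>\<^sup>+ s. ennreal (fission_step_min * flight_const) * emeasure lborel A * indicator {0..<\<kappa> r v} s \<partial>lborel)"
    using \<kappa>_pos[OF rv] by (subst nn_integral_cmult_indicator) auto
  also have "\<dots> \<le> (\<integral>\<^sup>+ s. indicator {0..<\<kappa> r v} s * (\<integral>\<^sup>+ w. indicator V w * fiss ?g (r + s *\<^sub>R v) w \<partial>lborel) \<partial>lborel)"
    using velocity_integral_fission_step_ge[OF A exit_time_in_domain]
    by (intro nn_integral_mono) (auto simp: mult.commute split: split_indicator)
  finally have "ennreal fission_step_min * (ennreal (fission_step_min * flight_const) * emeasure lborel A * ennreal (\<kappa> r v))
      \<le> fiss (fiss ?g) r v"
    by (intro order.trans[OF mult_left_mono fission_step_ge[OF rv]]) auto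
  moreover have "fiss (fiss ?g) r v \<le> kern (kern ?g) r v"
    using fission_step_le_fission_kernel fission_kernel_mono[OF fission_step_le_fission_kernel rv]
    by (rule order.trans)
  ultimately show ?thesis
    unfolding killed_expect_def numeral_2_eq_2
    using fission_step_min_pos less_imp_le[OF flight_const_pos] \<kappa>_pos[OF rv]
    by (simp add: ennreal_mult power2_eq_square mult_ac)
qed

lemma killed_expect_2_le:
  assumes "r \<in> D" "v \<in> V"
  shows "killed_expect D V \<sigma>s \<sigma>f \<pi>s \<pi>f Nmax 2 (\<lambda>_ _. 1) r v \<le> ennreal (\<alpha>_max * \<kappa> r v)"
proof -
  have "kern (\<lambda>_ _. 1) x w \<le> 1" if "w \<in> V" for x w
    using order.trans[OF fission_kernel_le_first_event_prob[of "\<lambda>_ _. 1", OF _ that] first_event_prob_le_1[OF that]]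
    by simp
  then have "kern (kern (\<lambda>_ _. 1)) r v \<le> first_event_prob r v"
    using assms(2) by (intro fission_kernel_le_first_event_prob)
  then show ?thesis
    unfolding killed_expect_def numeral_2_eq_2 using first_event_prob_le[OF assms] by simp
qed

lemma cond_prob_2_ge:
  assumes "A \<in> sets borel" "A \<subseteq> D \<times> V" "r \<in> D" "v \<in> V"
  shows "ennreal (fission_step_min^2 * flight_const / \<alpha>_max) * emeasure lborel A
    \<le> cond_prob D V \<sigma>s \<sigma>f \<pi>s \<pi>f Nmax 2 A r v"
proof -
  define K where "K = fission_step_min^2 * flight_const"
  have K: "0 \<le> K" unfolding K_def using less_imp_le[OF flight_const_pos] by simp
  have \<kappa>: "0 < \<kappa> r v" using \<kappa>_pos[OF assms(3,4)] .
  have split: "ennreal (K / \<alpha>_max) * ennreal (\<alpha>_max * \<kappa> r v) = ennreal (K * \<kappa> r v)"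
    using K \<kappa> \<alpha>_max_pos by (simp add: ennreal_mult[symmetric])
  have "ennreal (K / \<alpha>_max) * emeasure lborel A
      = ennreal (K / \<alpha>_max) * emeasure lborel A * ennreal (\<alpha>_max * \<kappa> r v) / ennreal (\<alpha>_max * \<kappa> r v)"
    using \<kappa> \<alpha>_max_pos by (intro ennreal_mult_divide_eq[symmetric]) auto
  also have "\<dots> = ennreal (K * \<kappa> r v) * emeasure lborel A / ennreal (\<alpha>_max * \<kappa> r v)"
    unfolding split[symmetric] by (simp add: mult_ac)
  also have "\<dots> \<le> cond_prob D V \<sigma>s \<sigma>f \<pi>s \<pi>f Nmax 2 A r v"
    unfolding cond_prob_def
    by (intro order.trans[OF divide_right_mono_ennreal divide_left_antimono_ennreal]
        killed_expect_2_ge[folded K_def] killed_expect_2_le assms)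
  finally show ?thesis unfolding K_def .
qed

lemma phase_space_measure:
  "D \<times> V \<in> sets lborel" "0 < emeasure lborel (D \<times> V)" "emeasure lborel (D \<times> V) < \<infinity>"
proof -
  have "D \<times> V \<in> sets (lborel \<Otimes>\<^sub>M lborel)"
    using domain(1) by (intro pair_measureI) auto
  then show "D \<times> V \<in> sets lborel"
    unfolding lborel_prod .
  have "emeasure (lborel \<Otimes>\<^sub>M lborel) (D \<times> V) = emeasure lborel D * emeasure lborel V"
    using domain(1) by (intro lborel.emeasure_pair_measure_Times) auto
  then have product: "emeasure lborel (D \<times> V) = emeasure lborel D * emeasure lborel V"
    unfolding lborel_prod .
  obtain x e where "0 < e" "ball x e \<subseteq> D"
    using domain(1,3) open_contains_ball by blast
  then have "0 < emeasure lborel (ball x e)"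
    using content_ball_pos[of e x] emeasure_lborel_ball_finite[of x e]
    by (simp add: emeasure_eq_ennreal_measure)
  moreover have "emeasure lborel (ball x e) \<le> emeasure lborel D"
    using \<open>ball x e \<subseteq> D\<close> domain(1) by (intro emeasure_mono) auto
  ultimately have "0 < emeasure lborel D"
    by (rule order.strict_trans2)
  moreover have "0 < emeasure lborel V"
    using V_measure_pos V_finite by (simp add: emeasure_eq_ennreal_measure)
  ultimately show "0 < emeasure lborel (D \<times> V)"
    unfolding product by (simp add: ennreal_zero_less_mult_iff)
  have "emeasure lborel D \<le> emeasure lborel (cball (0::real^3) R)"
    using domain(1) norm_le_R by (intro emeasure_mono) auto
  then have "emeasure lborel D < \<infinity>"
    using emeasure_bounded_finite[of "cball (0::real^3) R"] by (simp add: top.not_eq_extremum)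
  then show "emeasure lborel (D \<times> V) < \<infinity>"
    unfolding product using V_finite by (simp add: ennreal_mult_less_top)
qed

lemma cond_prob_2_ge_uniform:
  "\<exists>c>0. \<forall>r\<in>D. \<forall>v\<in>V. \<forall>A \<in> sets borel. A \<subseteq> D \<times> V \<longrightarrow>
     ennreal c * emeasure (uniform_measure lborel (D \<times> V)) A \<le> cond_prob D V \<sigma>s \<sigma>f \<pi>s \<pi>f Nmax 2 A r v"
proof (intro exI conjI ballI allI impI)
  define K where "K = fission_step_min^2 * flight_const / \<alpha>_max"
  define L where "L = measure lborel (D \<times> V)"
  have L_eq: "emeasure lborel (D \<times> V) = ennreal L"
    using phase_space_measure(3) unfolding L_def by (simp add: emeasure_eq_ennreal_measure)
  then have L_pos: "0 < L"
    using phase_space_measure(2) by simp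
  have K_pos: "0 < K"
    unfolding K_def using fission_step_min_pos flight_const_pos \<alpha>_max_pos by simp
  then show "0 < K * L"
    using L_pos by simp
  fix r v A assume "r \<in> D" "v \<in> V" "A \<in> sets borel" "A \<subseteq> D \<times> V"
  then have "emeasure (uniform_measure lborel (D \<times> V)) A = emeasure lborel A / ennreal L"
    using phase_space_measure(1) unfolding L_eq[symmetric]
    by (subst emeasure_uniform_measure) (auto simp: Int_absorb1)
  then have "ennreal (K * L) * emeasure (uniform_measure lborel (D \<times> V)) A
      = ennreal K * emeasure lborel A * ennreal L / ennreal L"
    using K_pos L_pos by (simp add: ennreal_mult ennreal_times_divide mult_ac)
  also have "\<dots> = ennreal K * emeasure lborel A"
    using L_pos by (intro ennreal_mult_divide_eq) auto
  also have "\<dots> \<le> cond_prob D V \<sigma>s \<sigma>f \<pi>s \<pi>f Nmax 2 A r v"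
    unfolding K_def by (rule cond_prob_2_ge) fact+
  finally show "ennreal (K * L) * emeasure (uniform_measure lborel (D \<times> V)) A
    \<le> cond_prob D V \<sigma>s \<sigma>f \<pi>s \<pi>f Nmax 2 A r v" .
qed

end

theorem mainTheorem6:
  fixes D :: "(real^3) set"
    and vmin vmax Nmax :: real
    and \<sigma>s \<sigma>f :: "real^3 \<Rightarrow> real^3 \<Rightarrow> real"
    and \<pi>s \<pi>f :: "real^3 \<Rightarrow> real^3 \<Rightarrow> real^3 \<Rightarrow> real"
  defines "V \<equiv> Vset vmin vmax"
  assumes dom: "smooth_domain D" "bounded D" "convex D"
    and bdry: "frontier D \<in> null_sets lborel"
    and vel: "0 < vmin" "vmin < vmax"
    and meas: "set_borel_measurable borel (D \<times> V) (\<lambda>(r, v). \<sigma>s r v)"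
              "set_borel_measurable borel (D \<times> V) (\<lambda>(r, v). \<sigma>f r v)"
              "set_borel_measurable borel (D \<times> V \<times> V) (\<lambda>(r, v, v'). \<pi>s r v v')"
              "set_borel_measurable borel (D \<times> V \<times> V) (\<lambda>(r, v, v'). \<pi>f r v v')"
    and nonneg: "\<And>r v. r \<in> D \<Longrightarrow> v \<in> V \<Longrightarrow> 0 \<le> \<sigma>s r v \<and> 0 \<le> \<sigma>f r v"
                "\<And>r v v'. r \<in> D \<Longrightarrow> v \<in> V \<Longrightarrow> v' \<in> V \<Longrightarrow> 0 \<le> \<pi>s r v v' \<and> 0 \<le> \<pi>f r v v'"
    and norm_s: "\<And>r v. r \<in> D \<Longrightarrow> v \<in> V \<Longrightarrow> (LINT v':V|lborel. \<pi>s r v v') = 1"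
    and H1: "\<exists>C. \<forall>r\<in>D. \<forall>v\<in>V. \<forall>v'\<in>V.
               \<sigma>s r v \<le> C \<and> \<sigma>f r v \<le> C \<and> \<pi>s r v v' \<le> C \<and> \<pi>f r v v' \<le> C"
    and H3: "\<exists>\<epsilon>>0. \<forall>r\<in>D. \<forall>v\<in>V. \<forall>v'\<in>V. \<epsilon> \<le> \<sigma>f r v * \<pi>f r v v'"
    and H4: "1 < Nmax" "\<And>r v. r \<in> D \<Longrightarrow> v \<in> V \<Longrightarrow> mean_offspring \<pi>f V r v \<le> Nmax"
  shows "\<exists>n0::nat. 1 \<le> n0 \<and> (\<exists>c1::real. 0 < c1 \<and>
           (\<forall>r\<in>D. \<forall>v\<in>V. \<forall>A \<in> sets borel. A \<subseteq> D \<times> V \<longrightarrow>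
              ennreal c1 * emeasure (uniform_measure lborel (D \<times> V)) A
                \<le> cond_prob D V \<sigma>s \<sigma>f \<pi>s \<pi>f Nmax n0 A r v))"
proof -
  obtain C where C: "\<forall>r\<in>D. \<forall>v\<in>V. \<forall>v'\<in>V.
      \<sigma>s r v \<le> C \<and> \<sigma>f r v \<le> C \<and> \<pi>s r v v' \<le> C \<and> \<pi>f r v v' \<le> C"
    using H1 by blast
  obtain \<epsilon> where \<epsilon>: "0 < \<epsilon>" "\<forall>r\<in>D. \<forall>v\<in>V. \<forall>v'\<in>V. \<epsilon> \<le> \<sigma>f r v * \<pi>f r v v'"
    using H3 by blast
  obtain R where R: "\<forall>y\<in>D. norm y \<le> R"
    using dom(2) unfolding bounded_iff by blast
  interpret nrw D V vmin vmax Nmax C \<epsilon> "max R 1" \<sigma>s \<sigma>f \<pi>s \<pi>f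
  proof
    show "V = Vset vmin vmax" unfolding V_def ..
    show "open D" "D \<noteq> {}" using dom(1) unfolding smooth_domain_def by auto
    show "norm y \<le> max R 1" if "y \<in> D" for y using R that by force
  qed (use dom(3) vel meas nonneg norm_s C \<epsilon> H4 in auto)
  show ?thesis
    using cond_prob_2_ge_uniform by (intro exI[where x="2::nat"] conjI) simp_all
qed

end
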